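(* Let $D$ be a $\Lambda^+$-valued divisor on $\mathbb{P}^1$ satisfying the integrality assumption, and let $T_D(z)$ be the associated rational Lax matrix. Then the normalized matrix $\mathsf{T}_D(z):=Z_0(z)^{-1}T_D(z)$ has all its entries in $\mathcal{A}[z]$, i.e. $\mathsf{T}_D(z)\in\mathcal{A}[z]\otimes_{\mathbb{C}}\mathrm{End}\,\mathbb{C}^n$.
   Context: Let $n\ge2$, $\Lambda=\bigoplus_{j=1}^n\mathbb{Z}\epsilon_j$, $\epsilon^\vee_j$ dual basis, $\alpha^\vee_i=\epsilon^\vee_i-\epsilon^\vee_{i+1}$, $\alpha_i=\epsilon_i-\epsilon_{i+1}$, $\varpi_i=-\sum_{j=i+1}^n\epsilon_j$ ($0\le i\le n-1$), $\Lambda^+=\{\nu:\alpha^\vee_i(\nu)\ge0,\ 1\le i<n\}$. A $\Lambda^+$-valued divisor is $D=\sum_{s=1}^N\gamma_s\varpi_{i_s}[x_s]+\mu[\infty]$ with $0\le i_s\le n-1$, $x_s\in\mathbb{C}$, $\gamma_s=1$ if $i_s\ne0$, $\gamma_s\in\{\pm1\}$ if $i_s=0$, and $\mu\in\Lambda^+$. Integrality assumption: with $\lambda=\sum_s\gamma_s\varpi_{i_s}$, $\lambda+\mu=\sum_{i=1}^{n-1}a_i\alpha_i$ with $a_i\in\mathbb{Z}_{\ge0}$; $a_0=a_n=0$. $\mathcal{A}$: the $\mathbb{C}$-algebra generated by $p_{i,r},e^{\pm q_{i,r}},(p_{i,r}-p_{i,s}+m)^{-1}$ ($1\le i<n$,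 $1\le r\ne s\le a_i$, $m\in\mathbb{Z}$) with relations $[e^{\pm q_{i,r}},p_{j,s}]=\mp\delta_{ij}\delta_{rs}e^{\pm q_{i,r}}$, the $p$'s pairwise commute, the $e^{q}$'s pairwise commute, $e^{\pm q_{i,r}}e^{\mp q_{i,r}}=1$. $Z_i(z)=\prod_{s:i_s=i}(z-x_s)^{\gamma_s}$, $P_j(z)=\prod_{r=1}^{a_j}(z-p_{j,r})$, $P_{j,r}(z)=\prod_{s\ne r}(z-p_{j,s})$, $P_0=P_n=1$. Rational Lax matrix: define elements of $\mathcal{A}((z^{-1}))$ (rational expressions expanded in $z^{-1}$): $g^D_i(z)=\frac{P_i(z)}{P_{i-1}(z-1)}\prod_{k=0}^{i-1}Z_k(z)$; for $i<j$, $e^D_{ij}(z)=-\sum_{r_i,\dots,r_{j-1}}\frac{P_{i-1}(p_{i,r_i}-1)\prod_{k=i}^{j-2}P_{k,r_k}(p_{k+1,r_{k+1}}-1)}{(z-p_{i,r_i})\prod_{k=i}^{j-1}P_{k,r_k}(p_{k,r_k})}\prod_{k=i}^{j-1}Z_k(p_{k,r_k})\cdot e^{\sum_{k=i}^{j-1}q_{k,r_k}}$, $f^D_{ji}(z)=\sum_{r_i,\dots,r_{j-1}}\frac{P_j(p_{j-1,r_{j-1}}+1)\prod_{k=i+1}^{j-1}P_{k,r_k}(p_{k-1,r_{k-1}}+1)}{(z-p_{i,r_i}-1)\prod_{k=i}^{j-1}P_{k,r_k}(p_{k,r_k})}\cdot e^{-\sum_{k=i}^{j-1}q_{k,r_k}}$,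 sums over $1\le r_k\le a_k$; $e^D_{ii}=f^D_{ii}=1$. Then $T_D(z)_{\alpha\beta}:=\sum_{i=1}^{\min(\alpha,\beta)}f^D_{\alpha i}(z)g^D_i(z)e^D_{i\beta}(z)$. *)

theory Defs
  imports Complex_Main "HOL-Library.FuncSet"
begin

text \<open>
Model of the algebra A (with rational dependence on the spectral parameter z).
The generators p_{i,r} are coordinates of pvar = (nat x nat => complex), indexed by (i,r).
A general element of A is a finite sum of terms c(p) e^{s.q} (coefficient on the left) with
s an integer vector (a shift). The relation [e^{q_{i,r}}, p_{i,r}] = - e^{q_{i,r}} means
e^{s.q} d(p) = d(p - s) e^{s.q}; this is the twisted product tmul below.
\<close>

type_synonym pvar = "nat \<times> nat \<Rightarrow> complex"
type_synonym shift = "nat \<times> nat \<Rightarrow> int"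
type_synonym coef = "complex \<Rightarrow> pvar \<Rightarrow> complex"

text \<open>A divisor: list of points (i_s, gamma_s, x_s); mu is given separately.\<close>
type_synonym divisor_pts = "(nat \<times> int \<times> complex) list"

definition Zf :: "divisor_pts \<Rightarrow> nat \<Rightarrow> complex \<Rightarrow> complex" where
  "Zf Ds k z = prod_list (map (\<lambda>(i, g, x). if i = k then (z - x) powi g else 1) Ds)"

text \<open>The weight lambda = sum_s gamma_s varpi_{i_s}, component j (coefficient of eps_j).\<close>
definition lam :: "divisor_pts \<Rightarrow> nat \<Rightarrow> int" where
  "lam Ds j = - sum_list (map (\<lambda>(i, g, x). if i < j then g else 0) Ds)"

definition Pp :: "(nat \<Rightarrow> nat) \<Rightarrow> nat \<Rightarrow> pvar \<Rightarrow> complex \<Rightarrow> complex" where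
  "Pp a j p z = (\<Prod>r\<in>{1..a j}. z - p (j, r))"

definition Ppr :: "(nat \<Rightarrow> nat) \<Rightarrow> nat \<Rightarrow> nat \<Rightarrow> pvar \<Rightarrow> complex \<Rightarrow> complex" where
  "Ppr a j r p z = (\<Prod>s\<in>{1..a j} - {r}. z - p (j, s))"

definition tuples :: "(nat \<Rightarrow> nat) \<Rightarrow> nat \<Rightarrow> nat \<Rightarrow> (nat \<Rightarrow> nat) set" where
  "tuples a i j = PiE {i..<j} (\<lambda>k. {1..a k})"

text \<open>The shift vector of e^{sum_{k=i}^{j-1} q_{k,r_k}}.\<close>
definition qsum :: "nat \<Rightarrow> nat \<Rightarrow> (nat \<Rightarrow> nat) \<Rightarrow> shift" where
  "qsum i j r = (\<lambda>v. \<Sum>k\<in>{i..<j}. if v = (k, r k) then 1 else 0)"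

definition tmul :: "coef \<times> shift \<Rightarrow> coef \<times> shift \<Rightarrow> coef \<times> shift" where
  "tmul cs dt = (case cs of (c, s) \<Rightarrow> case dt of (d, t) \<Rightarrow>
      ((\<lambda>z p. c z p * d z (\<lambda>v. p v - of_int (s v))), (\<lambda>v. s v + t v)))"

definition eterm :: "divisor_pts \<Rightarrow> (nat \<Rightarrow> nat) \<Rightarrow> nat \<Rightarrow> nat \<Rightarrow> (nat \<Rightarrow> nat) \<Rightarrow> coef \<times> shift" where
  "eterm Ds a i j r = (if i = j then ((\<lambda>z p. 1), (\<lambda>v. 0)) else
     ((\<lambda>z p. - (Pp a (i - 1) p (p (i, r i) - 1)
                 * (\<Prod>k\<in>{i..<j - 1}. Ppr a k (r k) p (p (k + 1, r (k + 1)) - 1)))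
               / ((z - p (i, r i)) * (\<Prod>k\<in>{i..<j}. Ppr a k (r k) p (p (k, r k))))
               * (\<Prod>k\<in>{i..<j}. Zf Ds k (p (k, r k)))),
      qsum i j r))"

definition fterm :: "(nat \<Rightarrow> nat) \<Rightarrow> nat \<Rightarrow> nat \<Rightarrow> (nat \<Rightarrow> nat) \<Rightarrow> coef \<times> shift" where
  "fterm a j i r = (if i = j then ((\<lambda>z p. 1), (\<lambda>v. 0)) else
     ((\<lambda>z p. (Pp a j p (p (j - 1, r (j - 1)) + 1)
                 * (\<Prod>k\<in>{i + 1..<j}. Ppr a k (r k) p (p (k - 1, r (k - 1)) + 1)))
               / ((z - p (i, r i) - 1) * (\<Prod>k\<in>{i..<j}. Ppr a k (r k) p (p (k, r k))))),
      (\<lambda>v. - qsum i j r v)))"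

definition gterm :: "divisor_pts \<Rightarrow> (nat \<Rightarrow> nat) \<Rightarrow> nat \<Rightarrow> coef \<times> shift" where
  "gterm Ds a i = ((\<lambda>z p. Pp a i p z / Pp a (i - 1) p (z - 1) * (\<Prod>k<i. Zf Ds k z)), (\<lambda>v. 0))"

text \<open>Coefficient of e^{k.q} in T_D(z)_{alpha beta} = sum_i f_{alpha i} g_i e_{i beta}.\<close>
definition Tcoeff :: "divisor_pts \<Rightarrow> (nat \<Rightarrow> nat) \<Rightarrow> nat \<Rightarrow> nat \<Rightarrow> shift \<Rightarrow> coef" where
  "Tcoeff Ds a \<alpha> \<beta> k = (\<lambda>z p. \<Sum>i\<in>{1..min \<alpha> \<beta>}. \<Sum>r\<in>tuples a i \<alpha>. \<Sum>r'\<in>tuples a i \<beta>.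
      (case tmul (tmul (fterm a \<alpha> i r) (gterm Ds a i)) (eterm Ds a i \<beta> r') of
         (c, s) \<Rightarrow> if s = k then c z p else 0))"

inductive_set polyfun :: "nat \<Rightarrow> (nat \<Rightarrow> nat) \<Rightarrow> (pvar \<Rightarrow> complex) set" for n a where
  const: "(\<lambda>p. c) \<in> polyfun n a"
| var: "1 \<le> i \<Longrightarrow> i < n \<Longrightarrow> 1 \<le> r \<Longrightarrow> r \<le> a i \<Longrightarrow> (\<lambda>p. p (i, r)) \<in> polyfun n a"
| add: "P \<in> polyfun n a \<Longrightarrow> Q \<in> polyfun n a \<Longrightarrow> (\<lambda>p. P p + Q p) \<in> polyfun n a"
| mult: "P \<in> polyfun n a \<Longrightarrow> Q \<in> polyfun n a \<Longrightarrow> (\<lambda>p. P p * Q p) \<in> polyfun n a"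

definition valid_den :: "nat \<Rightarrow> (nat \<Rightarrow> nat) \<Rightarrow> nat \<times> nat \<times> nat \<times> int \<Rightarrow> bool" where
  "valid_den n a d = (case d of (i, r, s, m) \<Rightarrow>
      1 \<le> i \<and> i < n \<and> r \<in> {1..a i} \<and> s \<in> {1..a i} \<and> r \<noteq> s)"

definition generic :: "nat \<Rightarrow> (nat \<Rightarrow> nat) \<Rightarrow> pvar \<Rightarrow> bool" where
  "generic n a p = (\<forall>i r s m. valid_den n a (i, r, s, m) \<longrightarrow> p (i, r) - p (i, s) + of_int m \<noteq> 0)"

text \<open>The commutative subalgebra C[p_{i,r}, (p_{i,r}-p_{i,s}+m)^{-1}] of A (as functions on generic points).\<close>
definition locring :: "nat \<Rightarrow> (nat \<Rightarrow> nat) \<Rightarrow> (pvar \<Rightarrow> complex) set" where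
  "locring n a = {c. \<exists>P\<in>polyfun n a. \<exists>ds. (\<forall>d\<in>set ds. valid_den n a d) \<and>
      (\<forall>p. generic n a p \<longrightarrow>
         c p = P p / prod_list (map (\<lambda>(i, r, s, m). p (i, r) - p (i, s) + of_int m) ds))}"

end

theory Submission
  imports Defs "HOL-Computational_Algebra.Polynomial" "HOL-Library.Function_Algebras"
begin

text \<open>
  Fix an entry (\<alpha>, \<beta>) and put m = min \<alpha> \<beta> and D(z) = P_1(z - 1) \<cdots> P_(m-1)(z - 1). In every
  summand f_\<alpha>i g_i e_i\<beta> of T_D(z)_\<alpha>\<beta>, written with the exponentials on the right, the simple poles
  coming from f_\<alpha>i and e_i\<beta> are roots of the factor P_i(z) of g_i (evaluated at the shifted
  point) or of D(z), and the denominator P_(i-1)(z - 1) of g_i divides D(z). Hence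
  N(z) = D(z) T_D(z)_\<alpha>\<beta> / Z_0(z) is a polynomial with coefficients in the localized ring.
  At a root z = p(j, s) + 1 of D the summands of level i \<noteq> j, j + 1 vanish, and those of level j
  cancel in pairs against those of level j + 1; so N vanishes at all roots of D and D divides N.
  Roots of D on different levels can coincide for special p; such points are reached from
  points where they are distinct by a perturbation that keeps p generic, and continuity
  carries the vanishing over.
\<close>

definition pshift :: "shift \<Rightarrow> pvar \<Rightarrow> pvar" where
  "pshift s p = (\<lambda>v. p v - of_int (s v))"

definition den_val :: "pvar \<Rightarrow> nat \<times> nat \<times> nat \<times> int \<Rightarrow> complex" where
  "den_val p d = (case d of (i, r, s, m) \<Rightarrow> p (i, r) - p (i, s) + of_int m)"

section \<open>The localized ring of coefficients\<close>

context fixes n :: nat and a :: "nat \<Rightarrow> nat"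
begin

lemma polyfun_uminus: "P \<in> polyfun n a \<Longrightarrow> (\<lambda>p. - P p) \<in> polyfun n a"
  using polyfun.mult[OF polyfun.const[of "-1"], of P] by simp

lemma polyfun_diff: "P \<in> polyfun n a \<Longrightarrow> Q \<in> polyfun n a \<Longrightarrow> (\<lambda>p. P p - Q p) \<in> polyfun n a"
  using polyfun.add[OF _ polyfun_uminus] by simp

lemma polyfun_prod:
  "finite A \<Longrightarrow> (\<And>x. x \<in> A \<Longrightarrow> f x \<in> polyfun n a) \<Longrightarrow> (\<lambda>p. \<Prod>x\<in>A. f x p) \<in> polyfun n a"
  by (induction A rule: finite_induct) (auto intro: polyfun.const polyfun.mult)

lemma polyfun_prod_list:
  "(\<And>x. x \<in> set xs \<Longrightarrow> f x \<in> polyfun n a) \<Longrightarrow> (\<lambda>p. prod_list (map (\<lambda>x. f x p) xs)) \<in> polyfun n a"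
  by (induction xs) (auto intro: polyfun.const polyfun.mult)

lemma polyfun_If:
  "(c \<Longrightarrow> P \<in> polyfun n a) \<Longrightarrow> (\<not> c \<Longrightarrow> Q \<in> polyfun n a) \<Longrightarrow> (\<lambda>p. if c then P p else Q p) \<in> polyfun n a"
  by (cases c) auto

lemma polyfun_pshift: "P \<in> polyfun n a \<Longrightarrow> (\<lambda>p. P (pshift s p)) \<in> polyfun n a"
  by (induction rule: polyfun.induct)
    (auto simp: pshift_def intro!: polyfun.intros polyfun_diff)

lemma polyfun_den_val: "valid_den n a d \<Longrightarrow> (\<lambda>p. den_val p d) \<in> polyfun n a"
  by (cases d) (auto simp: den_val_def valid_den_def intro!: polyfun.intros polyfun_diff)

lemma prod_den_val_nonzero:
  "generic n a p \<Longrightarrow> \<forall>d\<in>set ds. valid_den n a d \<Longrightarrow> prod_list (map (den_val p) ds) \<noteq> 0"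
  by (induction ds) (auto simp: generic_def den_val_def split: prod.splits)

lemma locring_iff: "c \<in> locring n a \<longleftrightarrow> (\<exists>P\<in>polyfun n a. \<exists>ds. (\<forall>d\<in>set ds. valid_den n a d) \<and>
    (\<forall>p. generic n a p \<longrightarrow> c p = P p / prod_list (map (den_val p) ds)))"
  by (simp add: locring_def den_val_def[abs_def])

lemma locringI:
  "P \<in> polyfun n a \<Longrightarrow> \<forall>d\<in>set ds. valid_den n a d \<Longrightarrow>
    (\<And>p. generic n a p \<Longrightarrow> c p = P p / prod_list (map (den_val p) ds)) \<Longrightarrow> c \<in> locring n a"
  unfolding locring_iff by blast

lemma locringE:
  assumes "c \<in> locring n a"
  obtains P ds where "P \<in> polyfun n a" "\<forall>d\<in>set ds. valid_den n a d"
    "\<And>p. generic n a p \<Longrightarrow> c p = P p / prod_list (map (den_val p) ds)"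
  using assms that unfolding locring_iff by blast

lemma locring_polyfun: "P \<in> polyfun n a \<Longrightarrow> P \<in> locring n a"
  by (rule locringI[of P "[]"]) auto

lemma locring_const: "(\<lambda>p. c) \<in> locring n a"
  by (intro locring_polyfun polyfun.const)

lemma locring_add:
  assumes "c \<in> locring n a" "d \<in> locring n a"
  shows "(\<lambda>p. c p + d p) \<in> locring n a"
proof -
  obtain P ds where P: "P \<in> polyfun n a" "\<forall>d\<in>set ds. valid_den n a d"
    "\<And>p. generic n a p \<Longrightarrow> c p = P p / prod_list (map (den_val p) ds)"
    using assms(1) by (elim locringE) blast
  obtain Q es where Q: "Q \<in> polyfun n a" "\<forall>d\<in>set es. valid_den n a d"
    "\<And>p. generic n a p \<Longrightarrow> d p = Q p / prod_list (map (den_val p) es)"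
    using assms(2) by (elim locringE) blast
  show ?thesis
  proof (rule locringI[of "\<lambda>p. P p * prod_list (map (den_val p) es) + Q p * prod_list (map (den_val p) ds)" "ds @ es"])
    show "(\<lambda>p. P p * prod_list (map (den_val p) es) + Q p * prod_list (map (den_val p) ds)) \<in> polyfun n a"
      using P Q by (intro polyfun.add polyfun.mult polyfun_prod_list polyfun_den_val) auto
    fix p assume g: "generic n a p"
    have "prod_list (map (den_val p) ds) \<noteq> 0" "prod_list (map (den_val p) es) \<noteq> 0"
      using prod_den_val_nonzero[OF g] P(2) Q(2) by auto
    then show "c p + d p = (P p * prod_list (map (den_val p) es) + Q p * prod_list (map (den_val p) ds))
        / prod_list (map (den_val p) (ds @ es))"
      by (simp add: P(3)[OF g] Q(3)[OF g] field_simps)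
  qed (use P Q in auto)
qed

lemma locring_mult:
  assumes "c \<in> locring n a" "d \<in> locring n a"
  shows "(\<lambda>p. c p * d p) \<in> locring n a"
proof -
  obtain P ds where P: "P \<in> polyfun n a" "\<forall>d\<in>set ds. valid_den n a d"
    "\<And>p. generic n a p \<Longrightarrow> c p = P p / prod_list (map (den_val p) ds)"
    using assms(1) by (elim locringE) blast
  obtain Q es where Q: "Q \<in> polyfun n a" "\<forall>d\<in>set es. valid_den n a d"
    "\<And>p. generic n a p \<Longrightarrow> d p = Q p / prod_list (map (den_val p) es)"
    using assms(2) by (elim locringE) blast
  show ?thesis
    by (rule locringI[of "\<lambda>p. P p * Q p" "ds @ es"]) (use P Q in \<open>auto intro: polyfun.mult\<close>)
qed

lemma locring_divide:
  "c \<in> locring n a \<Longrightarrow> (\<lambda>p. 1 / d p) \<in> locring n a \<Longrightarrow> (\<lambda>p. c p / d p) \<in> locring n a"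
  using locring_mult[of c "\<lambda>p. 1 / d p"] by simp

lemma locring_sum:
  "finite A \<Longrightarrow> (\<And>x. x \<in> A \<Longrightarrow> f x \<in> locring n a) \<Longrightarrow> (\<lambda>p. \<Sum>x\<in>A. f x p) \<in> locring n a"
  by (induction A rule: finite_induct) (auto intro: locring_const locring_add)

lemma locring_prod:
  "finite A \<Longrightarrow> (\<And>x. x \<in> A \<Longrightarrow> f x \<in> locring n a) \<Longrightarrow> (\<lambda>p. \<Prod>x\<in>A. f x p) \<in> locring n a"
  by (induction A rule: finite_induct) (auto intro: locring_const locring_mult)

lemma locring_power: "c \<in> locring n a \<Longrightarrow> (\<lambda>p. c p ^ k) \<in> locring n a"
  by (induction k) (auto intro: locring_const locring_mult)

lemma locring_inverse_den:
  "valid_den n a (i, r, s, m) \<Longrightarrow> (\<lambda>p. 1 / (p (i, r) - p (i, s) + of_int m)) \<in> locring n a"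
  by (rule locringI[of "\<lambda>p. 1" "[(i, r, s, m)]"]) (auto simp: den_val_def intro: polyfun.const)

lemma generic_pshift:
  assumes "generic n a p"
  shows "generic n a (pshift s p)"
  unfolding generic_def
proof (intro allI impI)
  fix i r s' m
  assume "valid_den n a (i, r, s', m)"
  then have "valid_den n a (i, r, s', m - s (i, r) + s (i, s'))" by (simp add: valid_den_def)
  then have "p (i, r) - p (i, s') + of_int (m - s (i, r) + s (i, s')) \<noteq> 0"
    using assms unfolding generic_def by blast
  then show "pshift s p (i, r) - pshift s p (i, s') + of_int m \<noteq> 0"
    by (simp add: pshift_def algebra_simps)
qed

lemma locring_pshift:
  assumes "c \<in> locring n a"
  shows "(\<lambda>p. c (pshift s p)) \<in> locring n a"
proof -
  obtain P ds where P: "P \<in> polyfun n a" "\<forall>d\<in>set ds. valid_den n a d"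
    "\<And>p. generic n a p \<Longrightarrow> c p = P p / prod_list (map (den_val p) ds)"
    using assms by (elim locringE) blast
  define shift_den where
    "shift_den = (\<lambda>(i::nat, r::nat, s'::nat, m::int). (i, r, s', m - s (i, r) + s (i, s')))"
  show ?thesis
  proof (rule locringI[OF polyfun_pshift[OF P(1)]])
    show "\<forall>d\<in>set (map shift_den ds). valid_den n a d"
      using P(2) by (auto simp: shift_den_def valid_den_def split: prod.splits)
    fix p assume g: "generic n a p"
    have "map (den_val (pshift s p)) ds = map (den_val p) (map shift_den ds)"
      by (auto simp: den_val_def pshift_def shift_den_def split: prod.splits)
    then show "c (pshift s p) = P (pshift s p) / prod_list (map (den_val p) (map shift_den ds))"
      by (simp only: P(3)[OF generic_pshift[OF g]])
  qed
qed

end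

section \<open>Polynomials in z over the localized ring\<close>

lemma sum_fun_apply: "(\<Sum>i\<in>A. f i) x = (\<Sum>i\<in>A. f i x :: 'b::comm_monoid_add)"
  by (induction A rule: infinite_finite_induct) auto

lemma power_fun_apply: "((f :: 'a \<Rightarrow> 'b::monoid_mult) ^ k) x = f x ^ k"
  by (induction k) auto

lemma poly_fun_apply: "poly (P :: ('a \<Rightarrow> 'b::comm_ring_1) poly) f x = (\<Sum>i\<le>degree P. coeff P i x * f x ^ i)"
  by (simp add: poly_altdef sum_fun_apply power_fun_apply)

text \<open>A polynomial in z over the localized ring is modelled as a polynomial whose coefficients are
  functions of p; poly_at evaluates it at a constant z.\<close>

definition poly_at :: "(pvar \<Rightarrow> complex) poly \<Rightarrow> complex \<Rightarrow> pvar \<Rightarrow> complex" where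
  "poly_at P z p = poly P (\<lambda>_. z) p"

lemma poly_at_altdef: "poly_at P z p = (\<Sum>i\<le>degree P. coeff P i p * z ^ i)"
  by (simp add: poly_at_def poly_fun_apply)

lemma poly_at_simps [simp]:
  "poly_at (P * Q) z p = poly_at P z p * poly_at Q z p"
  "poly_at (P + Q) z p = poly_at P z p + poly_at Q z p"
  "poly_at [:c:] z p = c p"
  "poly_at [:-c, 1:] z p = z - c p"
  by (simp_all add: poly_at_def)

lemma poly_at_eq_poly: "poly_at P (w p) p = poly P w p"
  by (simp add: poly_at_def poly_fun_apply)

lemma poly_at_synthetic_div: "poly_at P z p = (z - w p) * poly_at (synthetic_div P w) z p + poly P w p"
proof -
  have "poly_at P z p = poly_at ([:-w, 1:] * synthetic_div P w + [:poly P w:]) z p"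
    by (simp only: synthetic_div_correct')
  then show ?thesis by (simp only: poly_at_simps)
qed

context fixes n :: nat and a :: "nat \<Rightarrow> nat"
begin

definition locring_coeffs :: "(pvar \<Rightarrow> complex) poly \<Rightarrow> bool" where
  "locring_coeffs P \<longleftrightarrow> (\<forall>i. coeff P i \<in> locring n a)"

definition locring_poly :: "(complex \<Rightarrow> pvar \<Rightarrow> complex) \<Rightarrow> bool" where
  "locring_poly f \<longleftrightarrow> (\<exists>P. locring_coeffs P \<and> (\<forall>p. generic n a p \<longrightarrow> (\<forall>z. f z p = poly_at P z p)))"

lemma locring_polyI:
  "locring_coeffs P \<Longrightarrow> (\<And>p z. generic n a p \<Longrightarrow> f z p = poly_at P z p) \<Longrightarrow> locring_poly f"
  unfolding locring_poly_def by blast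

lemma locring_polyE:
  assumes "locring_poly f"
  obtains P where "locring_coeffs P" "\<And>p z. generic n a p \<Longrightarrow> f z p = poly_at P z p"
  using assms unfolding locring_poly_def by blast

lemma locring_coeffs_pCons_iff: "locring_coeffs (pCons c P) \<longleftrightarrow> c \<in> locring n a \<and> locring_coeffs P"
  unfolding locring_coeffs_def by (metis coeff_pCons_0 coeff_pCons_Suc not0_implies_Suc)

lemma locring_coeffs_0: "locring_coeffs 0"
  by (simp add: locring_coeffs_def zero_fun_def locring_const)

lemma locring_coeffs_const: "c \<in> locring n a \<Longrightarrow> locring_coeffs [:c:]"
  by (simp add: locring_coeffs_pCons_iff locring_coeffs_0)

lemma locring_coeffs_add: "locring_coeffs P \<Longrightarrow> locring_coeffs Q \<Longrightarrow> locring_coeffs (P + Q)"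
  unfolding locring_coeffs_def by (simp add: plus_fun_def locring_add)

lemma locring_coeffs_mult:
  assumes "locring_coeffs P" "locring_coeffs Q"
  shows "locring_coeffs (P * Q)"
  unfolding locring_coeffs_def
proof
  fix i
  have "coeff (P * Q) i = (\<lambda>p. \<Sum>j\<le>i. coeff P j p * coeff Q (i - j) p)"
    by (auto simp: coeff_mult sum_fun_apply)
  then show "coeff (P * Q) i \<in> locring n a"
    using assms unfolding locring_coeffs_def by (auto intro!: locring_sum locring_mult)
qed

lemma locring_poly_eval: "locring_coeffs P \<Longrightarrow> w \<in> locring n a \<Longrightarrow> poly P w \<in> locring n a"
  unfolding poly_fun_apply[abs_def] locring_coeffs_def
  by (intro locring_sum locring_mult locring_power) auto

lemma locring_coeffs_synthetic_div:
  "locring_coeffs P \<Longrightarrow> w \<in> locring n a \<Longrightarrow> locring_coeffs (synthetic_div P w)"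
  by (induction P rule: pCons_induct)
    (auto simp: locring_coeffs_pCons_iff locring_coeffs_0 intro: locring_poly_eval)

lemma locring_poly_cong: "locring_poly f \<Longrightarrow> (\<And>p z. generic n a p \<Longrightarrow> g z p = f z p) \<Longrightarrow> locring_poly g"
  unfolding locring_poly_def by simp

lemma locring_poly_const: "c \<in> locring n a \<Longrightarrow> locring_poly (\<lambda>z p. c p)"
  by (rule locring_polyI[of "[:c:]"]) (simp_all add: locring_coeffs_const)

lemma locring_poly_add:
  assumes "locring_poly f" "locring_poly g"
  shows "locring_poly (\<lambda>z p. f z p + g z p)"
proof -
  obtain P Q where "locring_coeffs P" "\<And>p z. generic n a p \<Longrightarrow> f z p = poly_at P z p"
    "locring_coeffs Q" "\<And>p z. generic n a p \<Longrightarrow> g z p = poly_at Q z p"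
    using assms by (meson locring_polyE)
  then show ?thesis by (intro locring_polyI[of "P + Q"]) (simp_all add: locring_coeffs_add)
qed

lemma locring_poly_mult:
  assumes "locring_poly f" "locring_poly g"
  shows "locring_poly (\<lambda>z p. f z p * g z p)"
proof -
  obtain P Q where "locring_coeffs P" "\<And>p z. generic n a p \<Longrightarrow> f z p = poly_at P z p"
    "locring_coeffs Q" "\<And>p z. generic n a p \<Longrightarrow> g z p = poly_at Q z p"
    using assms by (meson locring_polyE)
  then show ?thesis by (intro locring_polyI[of "P * Q"]) (simp_all add: locring_coeffs_mult)
qed

lemma locring_poly_If:
  "(c \<Longrightarrow> locring_poly f) \<Longrightarrow> (\<not> c \<Longrightarrow> locring_poly g) \<Longrightarrow> locring_poly (\<lambda>z p. if c then f z p else g z p)"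
  by (cases c) auto

lemma locring_poly_linear:
  assumes "P \<in> polyfun n a"
  shows "locring_poly (\<lambda>z p. z - P p)"
proof (rule locring_polyI[of "[:-P, 1:]"])
  show "locring_coeffs [:-P, 1:]"
    using assms by (simp add: locring_coeffs_pCons_iff locring_coeffs_0 fun_Compl_def one_fun_def
        locring_const locring_polyfun polyfun_uminus)
qed simp

lemma locring_poly_sum:
  "finite A \<Longrightarrow> (\<And>x. x \<in> A \<Longrightarrow> locring_poly (f x)) \<Longrightarrow> locring_poly (\<lambda>z p. \<Sum>x\<in>A. f x z p)"
  by (induction A rule: finite_induct)
    (auto intro: locring_poly_const[OF locring_const] locring_poly_add)

lemma locring_poly_prod:
  "finite A \<Longrightarrow> (\<And>x. x \<in> A \<Longrightarrow> locring_poly (f x)) \<Longrightarrow> locring_poly (\<lambda>z p. \<Prod>x\<in>A. f x z p)"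
  by (induction A rule: finite_induct)
    (auto intro: locring_poly_const[OF locring_const] locring_poly_mult)

lemma locring_poly_prod_list:
  "(\<And>x. x \<in> set xs \<Longrightarrow> locring_poly (f x)) \<Longrightarrow> locring_poly (\<lambda>z p. prod_list (map (\<lambda>x. f x z p) xs))"
  by (induction xs) (auto intro: locring_poly_const[OF locring_const] locring_poly_mult)

lemma locring_poly_coeff_list:
  assumes "locring_poly f"
  obtains cs where "set cs \<subseteq> locring n a"
    "\<And>p z. generic n a p \<Longrightarrow> f z p = (\<Sum>d<length cs. (cs ! d) p * z ^ d)"
proof -
  obtain P where P: "locring_coeffs P" "\<And>p z. generic n a p \<Longrightarrow> f z p = poly_at P z p"
    using assms by (elim locring_polyE) blast
  define cs where "cs = map (coeff P) [0..<Suc (degree P)]"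
  have "(\<Sum>d<length cs. (cs ! d) p * z ^ d) = poly_at P z p" for p z
  proof -
    have "(\<Sum>d<length cs. (cs ! d) p * z ^ d) = (\<Sum>d<Suc (degree P). coeff P d p * z ^ d)"
      unfolding cs_def by (rule sum.cong) (auto simp del: upt_Suc)
    then show ?thesis by (simp only: poly_at_altdef lessThan_Suc_atMost)
  qed
  moreover have "set cs \<subseteq> locring n a" using P(1) by (auto simp: cs_def locring_coeffs_def)
  ultimately show ?thesis using P(2) that by simp
qed

end

section \<open>Dividing out the roots z = p(l,u) + 1\<close>

text \<open>Genericity only separates the coordinates p(l,u) within one level l. Moving p to
  perturb p t keeps it generic and, for t \<noteq> 0, separates the coordinates of different levels,
  so identities proved under that extra separation extend to all generic p by continuity.\<close>

definition perturb :: "pvar \<Rightarrow> complex \<Rightarrow> pvar" where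
  "perturb p t = (\<lambda>v. p v + t * of_nat (fst v))"

context fixes n :: nat and a :: "nat \<Rightarrow> nat"
begin

lemma generic_perturb: "generic n a p \<Longrightarrow> generic n a (perturb p t)"
  unfolding generic_def perturb_def by simp

lemma polyfun_continuous_perturb: "P \<in> polyfun n a \<Longrightarrow> isCont (\<lambda>t. P (perturb p t)) t0"
  by (induction rule: polyfun.induct) (auto simp: perturb_def intro!: continuous_intros)

lemma locring_continuous_perturb:
  assumes "c \<in> locring n a" "generic n a p"
  shows "isCont (\<lambda>t. c (perturb p t)) 0"
proof -
  obtain P ds where P: "P \<in> polyfun n a" "\<forall>d\<in>set ds. valid_den n a d"
    "\<And>p. generic n a p \<Longrightarrow> c p = P p / prod_list (map (den_val p) ds)"
    using assms(1) by (elim locringE) blast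
  have "(\<lambda>t. c (perturb p t)) = (\<lambda>t. P (perturb p t) / prod_list (map (\<lambda>d. den_val (perturb p t) d) ds))"
    using P(3)[OF generic_perturb[OF assms(2)]] by auto
  moreover have "isCont (\<lambda>t. prod_list (map (\<lambda>d. den_val (perturb p t) d) ds)) 0"
    using P(2) by (intro polyfun_continuous_perturb polyfun_prod_list polyfun_den_val) auto
  moreover have "prod_list (map (den_val (perturb p 0)) ds) \<noteq> 0"
    using prod_den_val_nonzero[OF generic_perturb[OF assms(2)] P(2)] .
  ultimately show ?thesis
    using polyfun_continuous_perturb[OF P(1)] by (auto intro!: continuous_intros)
qed

lemma poly_at_continuous_perturb:
  assumes "locring_coeffs n a Q" "generic n a p"
  shows "isCont (\<lambda>t. poly_at Q (perturb p t (l, u) + 1) (perturb p t)) 0"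
  unfolding poly_at_altdef
proof (intro continuous_intros)
  fix i show "isCont (\<lambda>t. coeff Q i (perturb p t)) 0"
    using assms locring_continuous_perturb unfolding locring_coeffs_def by blast
qed (auto simp: perturb_def intro!: continuous_intros)

lemma poly_at_root_by_continuity:
  assumes Q: "locring_coeffs n a Q" and "l \<noteq> l0" and g: "generic n a p"
    and root: "\<And>p. generic n a p \<Longrightarrow> p (l, u) \<noteq> p (l0, u0) \<Longrightarrow> poly_at Q (p (l, u) + 1) p = 0"
  shows "poly_at Q (p (l, u) + 1) p = 0"
proof (cases "p (l, u) = p (l0, u0)")
  case True
  define h where "h = (\<lambda>t. poly_at Q (perturb p t (l, u) + 1) (perturb p t))"
  have "h t = 0" if "t \<noteq> 0" for t
  proof -
    have "perturb p t (l, u) - perturb p t (l0, u0) = t * (of_nat l - of_nat l0)"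
      using True by (simp add: perturb_def algebra_simps)
    then have "perturb p t (l, u) \<noteq> perturb p t (l0, u0)"
      using that \<open>l \<noteq> l0\<close> by auto
    then show ?thesis unfolding h_def by (intro root generic_perturb g)
  qed
  then have "(h \<longlongrightarrow> 0) (at 0)"
    by (intro tendsto_eventually) (auto simp: eventually_at_filter)
  moreover have "(h \<longlongrightarrow> h 0) (at 0)"
    using poly_at_continuous_perturb[OF Q g] by (simp add: h_def isCont_def)
  ultimately have "h 0 = 0" by (metis LIM_unique)
  then show ?thesis by (simp add: h_def perturb_def)
qed (rule root[OF g])

lemma locring_poly_factor_root:
  assumes P: "locring_coeffs n a P" and w: "w \<in> locring n a"
    and root: "\<And>p. generic n a p \<Longrightarrow> poly P w p = 0"
  shows "\<exists>Q. locring_coeffs n a Q \<and> (\<forall>p z. generic n a p \<longrightarrow> poly_at P z p = (z - w p) * poly_at Q z p)"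
  using locring_coeffs_synthetic_div[OF P w] poly_at_synthetic_div[of P _ _ w] root by auto

lemma poly_at_root_of_quotient:
  assumes Q: "locring_coeffs n a Q"
    and PQ: "\<And>p z. generic n a p \<Longrightarrow> poly_at P z p = (z - (p (l0, u0) + 1)) * poly_at Q z p"
    and root: "\<And>p. generic n a p \<Longrightarrow> poly_at P (p (l, u) + 1) p = 0"
    and lu: "(l, u) \<noteq> (l0, u0)" "1 \<le> l" "l < n" "u \<in> {1..a l}" "u0 \<in> {1..a l0}"
    and g: "generic n a p"
  shows "poly_at Q (p (l, u) + 1) p = 0"
proof -
  have root': "poly_at Q (q (l, u) + 1) q = 0" if "generic n a q" "q (l, u) \<noteq> q (l0, u0)" for q
    using root[OF that(1)] PQ[OF that(1), of "q (l, u) + 1"] that(2) by auto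
  show ?thesis
  proof (cases "l = l0")
    case True
    then have "valid_den n a (l, u, u0, 0)" using lu by (auto simp: valid_den_def)
    then have "p (l, u) \<noteq> p (l0, u0)" using g True unfolding generic_def by force
    then show ?thesis by (rule root'[OF g])
  next
    case False
    then show ?thesis by (rule poly_at_root_by_continuity[OF Q _ g root'])
  qed
qed

lemma divide_out_roots:
  assumes "finite W" "W \<subseteq> {(l, u). 1 \<le> l \<and> l < n \<and> 1 \<le> u \<and> u \<le> a l}" "locring_coeffs n a P"
    and "\<forall>(l, u)\<in>W. \<forall>p. generic n a p \<longrightarrow> poly_at P (p (l, u) + 1) p = 0"
  shows "\<exists>Q. locring_coeffs n a Q \<and>
    (\<forall>p z. generic n a p \<longrightarrow> poly_at P z p = (\<Prod>(l, u)\<in>W. z - (p (l, u) + 1)) * poly_at Q z p)"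
  using assms
proof (induction W arbitrary: P rule: finite_induct)
  case empty
  then show ?case by auto
next
  case (insert x W)
  obtain l0 u0 where x: "x = (l0, u0)" by fastforce
  have "1 \<le> l0" "l0 < n" "1 \<le> u0" "u0 \<le> a l0" using insert.prems(1) x by auto
  then have "(\<lambda>p. p (l0, u0) + 1) \<in> locring n a"
    by (intro locring_polyfun polyfun.intros)
  moreover have "poly P (\<lambda>p. p (l0, u0) + 1) p = 0" if "generic n a p" for p
    using insert.prems(3) that x poly_at_eq_poly[of P "\<lambda>p. p (l0, u0) + 1"] by auto
  ultimately obtain Q1 where Q1: "locring_coeffs n a Q1"
    and PQ1: "\<And>p z. generic n a p \<Longrightarrow> poly_at P z p = (z - (p (l0, u0) + 1)) * poly_at Q1 z p"
    using locring_poly_factor_root[OF insert.prems(2)] by blast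
  have "poly_at Q1 (p (l, u) + 1) p = 0" if "(l, u) \<in> W" "generic n a p" for l u p
    using that insert.hyps(2) insert.prems(1,3) x
    by (intro poly_at_root_of_quotient[OF Q1 PQ1, of l u]) auto
  then obtain Q where "locring_coeffs n a Q"
    and "\<forall>p z. generic n a p \<longrightarrow> poly_at Q1 z p = (\<Prod>(l, u)\<in>W. z - (p (l, u) + 1)) * poly_at Q z p"
    using insert.IH[OF _ Q1] insert.prems(1) by blast
  then show ?case
    using PQ1 insert.hyps x by (intro exI[of _ Q]) auto
qed

end

lemma qsum_at: "qsum i j r (l, u) = (if i \<le> l \<and> l < j \<and> r l = u then 1 else 0)"
proof -
  have "qsum i j r (l, u) = (\<Sum>k\<in>{i..<j}. if k = l then (if r l = u then 1 else 0) else 0)"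
    unfolding qsum_def by (intro sum.cong) auto
  then show ?thesis by (simp add: sum.delta)
qed

lemma qsum_empty: "qsum i i r = (\<lambda>v. 0)"
  unfolding qsum_def by simp

lemma qsum_upd: "j < k \<Longrightarrow> qsum j k (\<rho>(j := s)) v = (if v = (j, s) then 1 else 0) + qsum (Suc j) k \<rho> v"
  by (cases v) (auto simp: qsum_at)

text \<open>Moving a coefficient to the right past exp(- q(i, r i) - ... - q(j - 1, r (j - 1)))
  raises each p(k, r k) by one.\<close>

definition pshift_tuple :: "nat \<Rightarrow> nat \<Rightarrow> (nat \<Rightarrow> nat) \<Rightarrow> pvar \<Rightarrow> pvar" where
  "pshift_tuple i j r p = pshift (\<lambda>v. - qsum i j r v) p"

lemma pshift_tuple_at:
  "pshift_tuple i j r p (l, u) = p (l, u) + (if i \<le> l \<and> l < j \<and> r l = u then 1 else 0)"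
  by (simp add: pshift_tuple_def pshift_def qsum_at)

lemma Pp_remove: "u \<in> {1..a l} \<Longrightarrow> Pp a l p x = (x - p (l, u)) * Ppr a l u p x"
  unfolding Pp_def Ppr_def by (rule prod.remove) auto

lemma Ppr_remove:
  "u \<in> {1..a l} \<Longrightarrow> u \<noteq> r \<Longrightarrow> Ppr a l r p x = (x - p (l, u)) * (\<Prod>s\<in>{1..a l} - {r} - {u}. x - p (l, s))"
  unfolding Ppr_def by (rule prod.remove) auto

lemma Pp_cong: "(\<And>u. p (l, u) = q (l, u)) \<Longrightarrow> Pp a l p x = Pp a l q x"
  unfolding Pp_def by simp

lemma Ppr_cong: "(\<And>u. u \<noteq> r \<Longrightarrow> p (l, u) = q (l, u)) \<Longrightarrow> Ppr a l r p x = Ppr a l r q x"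
  unfolding Ppr_def by (intro prod.cong) auto

lemma Pp_empty: "a l = 0 \<Longrightarrow> Pp a l p x = 1"
  unfolding Pp_def by simp

lemma Ppr_shifted_nonzero:
  assumes "generic n a p" "1 \<le> l" "l < n" "r \<in> {1..a l}"
  shows "Ppr a l r p (p (l, r) + of_int m) \<noteq> 0"
proof -
  have "p (l, r) + of_int m - p (l, u) \<noteq> 0" if "u \<in> {1..a l} - {r}" for u
  proof -
    have "valid_den n a (l, r, u, m)" using assms that by (auto simp: valid_den_def)
    then have "p (l, r) - p (l, u) + of_int m \<noteq> 0" using assms(1) unfolding generic_def by blast
    then show ?thesis by (simp add: algebra_simps)
  qed
  then show ?thesis unfolding Ppr_def by (simp add: prod_zero_iff)
qed

lemma tuples_mem: "r \<in> tuples a i j \<Longrightarrow> k \<in> {i..<j} \<Longrightarrow> r k \<in> {1..a k}"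
  unfolding tuples_def by auto

lemma finite_tuples: "finite (tuples a i j)"
  unfolding tuples_def by (intro finite_PiE) auto

lemma bij_betw_tuples_upd:
  assumes "j < k" "s \<in> {1..a j}"
  shows "bij_betw (\<lambda>\<rho>. \<rho>(j := s)) (tuples a (Suc j) k) {r \<in> tuples a j k. r j = s}"
proof (rule bij_betw_imageI)
  show "inj_on (\<lambda>\<rho>. \<rho>(j := s)) (tuples a (Suc j) k)"
  proof (rule inj_onI)
    fix x y assume "x \<in> tuples a (Suc j) k" "y \<in> tuples a (Suc j) k" and upd: "x(j := s) = y(j := s)"
    then have "x j = y j" unfolding tuples_def by (auto simp: PiE_iff extensional_def)
    then show "x = y" using upd by (metis fun_upd_triv fun_upd_upd)
  qed
  show "(\<lambda>\<rho>. \<rho>(j := s)) ` tuples a (Suc j) k = {r \<in> tuples a j k. r j = s}"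
  proof (intro equalityI subsetI)
    fix r assume "r \<in> {r \<in> tuples a j k. r j = s}"
    then have "r(j := undefined) \<in> tuples a (Suc j) k" "r = (r(j := undefined))(j := s)"
      unfolding tuples_def by (auto simp: PiE_iff extensional_def)
    then show "r \<in> (\<lambda>\<rho>. \<rho>(j := s)) ` tuples a (Suc j) k" by blast
  qed (use assms in \<open>auto simp: tuples_def PiE_iff extensional_def\<close>)
qed

lemma tmul3_fst: "fst (tmul (tmul F G) E) z p =
   fst F z p * fst G z (pshift (snd F) p) * fst E z (pshift (\<lambda>v. snd F v + snd G v) p)"
  by (cases F; cases G; cases E) (simp add: tmul_def pshift_def)

lemma tmul3_snd: "snd (tmul (tmul F G) E) = (\<lambda>v. snd F v + snd G v + snd E v)"
  by (cases F; cases G; cases E) (simp add: tmul_def)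

definition fcoeff :: "(nat \<Rightarrow> nat) \<Rightarrow> nat \<Rightarrow> nat \<Rightarrow> (nat \<Rightarrow> nat) \<Rightarrow> pvar \<Rightarrow> complex" where
  "fcoeff a j i r p = (if i < j then (Pp a j p (p (j - 1, r (j - 1)) + 1)
     * (\<Prod>k\<in>{i + 1..<j}. Ppr a k (r k) p (p (k - 1, r (k - 1)) + 1)))
     / (\<Prod>k\<in>{i..<j}. Ppr a k (r k) p (p (k, r k))) else 1)"

definition ecoeff :: "divisor_pts \<Rightarrow> (nat \<Rightarrow> nat) \<Rightarrow> nat \<Rightarrow> nat \<Rightarrow> (nat \<Rightarrow> nat) \<Rightarrow> pvar \<Rightarrow> complex" where
  "ecoeff Ds a j i r p = (if i < j then - (Pp a (i - 1) p (p (i, r i) - 1)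
     * (\<Prod>k\<in>{i..<j - 1}. Ppr a k (r k) p (p (k + 1, r (k + 1)) - 1)))
     / (\<Prod>k\<in>{i..<j}. Ppr a k (r k) p (p (k, r k)))
     * (\<Prod>k\<in>{i..<j}. Zf Ds k (p (k, r k))) else 1)"

lemma fterm_fst:
  "i \<le> j \<Longrightarrow> fst (fterm a j i r) z p = fcoeff a j i r p * (if i < j then 1 / (z - p (i, r i) - 1) else 1)"
  unfolding fterm_def fcoeff_def by auto

lemma fterm_snd: "i \<le> j \<Longrightarrow> snd (fterm a j i r) = (\<lambda>v. - qsum i j r v)"
  unfolding fterm_def by (auto simp: qsum_empty)

lemma eterm_fst:
  "i \<le> j \<Longrightarrow> fst (eterm Ds a i j r) z p = ecoeff Ds a j i r p * (if i < j then 1 / (z - p (i, r i)) else 1)"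
  unfolding eterm_def ecoeff_def by auto

lemma eterm_snd: "i \<le> j \<Longrightarrow> snd (eterm Ds a i j r) = qsum i j r"
  unfolding eterm_def by (auto simp: qsum_empty)

lemma gterm_fst: "fst (gterm Ds a i) z p = Pp a i p z / Pp a (i - 1) p (z - 1) * (\<Prod>k<i. Zf Ds k z)"
  by (simp add: gterm_def)

lemma gterm_snd: "snd (gterm Ds a i) = (\<lambda>v. 0)"
  by (simp add: gterm_def)

section \<open>Clearing the denominators of a summand\<close>

definition cleared_roots :: "(nat \<Rightarrow> nat) \<Rightarrow> nat \<Rightarrow> nat \<Rightarrow> nat \<Rightarrow> (nat \<Rightarrow> nat) \<Rightarrow> (nat \<Rightarrow> nat) \<Rightarrow> nat set" where
  "cleared_roots a \<alpha> \<beta> i r r' = {1..a i} - (if i < \<alpha> then {r i} else {}) - (if i < \<beta> then {r' i} else {})"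

definition diag_index :: "nat \<Rightarrow> nat \<Rightarrow> nat \<Rightarrow> (nat \<Rightarrow> nat) \<Rightarrow> (nat \<Rightarrow> nat) \<Rightarrow> bool" where
  "diag_index \<alpha> \<beta> i r r' \<longleftrightarrow> i < \<alpha> \<and> i < \<beta> \<and> r i = r' i"

definition cleared_levels :: "nat \<Rightarrow> nat \<Rightarrow> nat \<Rightarrow> (nat \<Rightarrow> nat) \<Rightarrow> (nat \<Rightarrow> nat) \<Rightarrow> nat set" where
  "cleared_levels \<alpha> \<beta> i r r' = {1..<min \<alpha> \<beta>} - {i - 1} - (if diag_index \<alpha> \<beta> i r r' then {i} else {})"

definition cleared_factor ::
    "(nat \<Rightarrow> nat) \<Rightarrow> nat \<Rightarrow> nat \<Rightarrow> nat \<Rightarrow> (nat \<Rightarrow> nat) \<Rightarrow> (nat \<Rightarrow> nat) \<Rightarrow> complex \<Rightarrow> pvar \<Rightarrow> complex" where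
  "cleared_factor a \<alpha> \<beta> i r r' z p = (\<Prod>u\<in>cleared_roots a \<alpha> \<beta> i r r'. z - p (i, u))
     * (\<Prod>l\<in>cleared_levels \<alpha> \<beta> i r r'. Pp a l p (z - 1))
     * (if diag_index \<alpha> \<beta> i r r' then Ppr a i (r i) p (z - 1) else 1)"

text \<open>The poles z = p(i, r i) + 1 of the f-factor and z = p'(i, r' i) of the e-factor are roots of
  P_i(z) taken at the shifted point p'; when they coincide, the second one is cancelled by the
  factor P_i(z - 1) of the common denominator.\<close>

lemma fpole_cancellation:
  assumes r: "i < \<alpha> \<Longrightarrow> r i \<in> {1..a i}" and z: "i < \<alpha> \<Longrightarrow> z \<noteq> p (i, r i) + 1"
  shows "(if i < \<alpha> then 1 / (z - p (i, r i) - 1) else 1) * Pp a i (pshift_tuple i \<alpha> r p) z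
    = (\<Prod>u\<in>{1..a i} - (if i < \<alpha> then {r i} else {}). z - p (i, u))"
proof (cases "i < \<alpha>")
  case True
  have "Ppr a i (r i) (pshift_tuple i \<alpha> r p) z = Ppr a i (r i) p z"
    by (rule Ppr_cong) (simp add: pshift_tuple_at)
  then have "Pp a i (pshift_tuple i \<alpha> r p) z = (z - p (i, r i) - 1) * Ppr a i (r i) p z"
    using Pp_remove[of "r i" a i "pshift_tuple i \<alpha> r p" z, OF r[OF True]] True
    by (simp add: pshift_tuple_at algebra_simps)
  moreover have "z - p (i, r i) - 1 \<noteq> 0" using z True by (auto simp: diff_eq_eq)
  ultimately show ?thesis using True by (simp add: Ppr_def)
next
  case False
  then show ?thesis by (simp add: Pp_def pshift_tuple_at)
qed

lemma epole_cancellation: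
  assumes "\<not> diag_index \<alpha> \<beta> i r r'" and r': "i < \<beta> \<Longrightarrow> r' i \<in> {1..a i}"
    and z: "i < \<beta> \<Longrightarrow> z \<noteq> pshift_tuple i \<alpha> r p (i, r' i)"
  shows "(\<Prod>u\<in>{1..a i} - (if i < \<alpha> then {r i} else {}). z - p (i, u))
      * (if i < \<beta> then 1 / (z - pshift_tuple i \<alpha> r p (i, r' i)) else 1)
    = (\<Prod>u\<in>cleared_roots a \<alpha> \<beta> i r r'. z - p (i, u))"
proof (cases "i < \<beta>")
  case True
  define R where "R = (if i < \<alpha> then {r i} else {})"
  have r'R: "r' i \<in> {1..a i} - R" using assms(1) r' True by (auto simp: R_def diag_index_def)
  have "pshift_tuple i \<alpha> r p (i, r' i) = p (i, r' i)"
    using assms(1) True by (auto simp: pshift_tuple_at diag_index_def)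
  then have "z - pshift_tuple i \<alpha> r p (i, r' i) = z - p (i, r' i)" "z - p (i, r' i) \<noteq> 0"
    using z[OF True] by auto
  moreover have "(\<Prod>u\<in>{1..a i} - R. z - p (i, u))
      = (z - p (i, r' i)) * (\<Prod>u\<in>cleared_roots a \<alpha> \<beta> i r r'. z - p (i, u))"
    using True prod.remove[OF _ r'R, of "\<lambda>u. z - p (i, u)"] by (simp add: cleared_roots_def R_def)
  ultimately show ?thesis using True by (simp add: R_def)
qed (simp add: cleared_roots_def)

lemma pole_cancellation:
  assumes i: "1 \<le> i" "i \<le> min \<alpha> \<beta>"
    and r: "i < \<alpha> \<Longrightarrow> r i \<in> {1..a i}" and r': "i < \<beta> \<Longrightarrow> r' i \<in> {1..a i}"
    and z: "i < \<alpha> \<Longrightarrow> z \<noteq> p (i, r i) + 1" "i < \<beta> \<Longrightarrow> z \<noteq> pshift_tuple i \<alpha> r p (i, r' i)"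
  shows "(if i < \<alpha> then 1 / (z - p (i, r i) - 1) else 1) * Pp a i (pshift_tuple i \<alpha> r p) z
      * (if i < \<beta> then 1 / (z - pshift_tuple i \<alpha> r p (i, r' i)) else 1)
      * (\<Prod>l\<in>{1..<min \<alpha> \<beta>} - {i - 1}. Pp a l p (z - 1))
    = cleared_factor a \<alpha> \<beta> i r r' z p"
proof -
  define R where "R = (if i < \<alpha> then {r i} else {})"
  define L where "L = {1..<min \<alpha> \<beta>} - {i - 1}"
  have fpole: "(if i < \<alpha> then 1 / (z - p (i, r i) - 1) else 1) * Pp a i (pshift_tuple i \<alpha> r p) z
      = (\<Prod>u\<in>{1..a i} - R. z - p (i, u))"
    unfolding R_def using r z(1) by (rule fpole_cancellation)
  show ?thesis
  proof (cases "diag_index \<alpha> \<beta> i r r'")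
    case True
    then have c: "i < \<alpha>" "i < \<beta>" "r' i = r i" by (auto simp: diag_index_def)
    define d where "d = z - p (i, r i) - 1"
    have "d \<noteq> 0" using z(1) c by (auto simp: d_def diff_eq_eq)
    have "i \<in> L" using c i by (auto simp: L_def)
    then have "(\<Prod>l\<in>L. Pp a l p (z - 1)) = Pp a i p (z - 1) * (\<Prod>l\<in>cleared_levels \<alpha> \<beta> i r r'. Pp a l p (z - 1))"
      using True by (simp add: L_def cleared_levels_def prod.remove)
    also have "Pp a i p (z - 1) = d * Ppr a i (r i) p (z - 1)"
      using Pp_remove[of "r i" a i p "z - 1", OF r[OF c(1)]] by (simp add: d_def algebra_simps)
    finally have M: "(\<Prod>l\<in>L. Pp a l p (z - 1))
        = d * Ppr a i (r i) p (z - 1) * (\<Prod>l\<in>cleared_levels \<alpha> \<beta> i r r'. Pp a l p (z - 1))" .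
    have e: "z - pshift_tuple i \<alpha> r p (i, r' i) = d" using c by (simp add: pshift_tuple_at d_def)
    have "cleared_roots a \<alpha> \<beta> i r r' = {1..a i} - R" using c by (auto simp: cleared_roots_def R_def)
    then show ?thesis
      unfolding fpole L_def[symmetric] M e cleared_factor_def using c True \<open>d \<noteq> 0\<close> by simp
  next
    case False
    have "(\<Prod>u\<in>{1..a i} - R. z - p (i, u)) * (if i < \<beta> then 1 / (z - pshift_tuple i \<alpha> r p (i, r' i)) else 1)
        = (\<Prod>u\<in>cleared_roots a \<alpha> \<beta> i r r'. z - p (i, u))"
      unfolding R_def using False r' z(2) by (rule epole_cancellation)
    moreover have "cleared_levels \<alpha> \<beta> i r r' = L" using False by (simp add: cleared_levels_def L_def)
    ultimately show ?thesis unfolding fpole L_def[symmetric] cleared_factor_def using False by simp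
  qed
qed

definition Tsummand ::
    "divisor_pts \<Rightarrow> (nat \<Rightarrow> nat) \<Rightarrow> nat \<Rightarrow> nat \<Rightarrow> nat \<Rightarrow> (nat \<Rightarrow> nat) \<Rightarrow> (nat \<Rightarrow> nat) \<Rightarrow> coef \<times> shift" where
  "Tsummand Ds a \<alpha> \<beta> i r r' = tmul (tmul (fterm a \<alpha> i r) (gterm Ds a i)) (eterm Ds a i \<beta> r')"

lemma Tsummand_snd:
  "i \<le> \<alpha> \<Longrightarrow> i \<le> \<beta> \<Longrightarrow> snd (Tsummand Ds a \<alpha> \<beta> i r r') = (\<lambda>v. - qsum i \<alpha> r v + qsum i \<beta> r' v)"
  unfolding Tsummand_def tmul3_snd by (simp add: fterm_snd gterm_snd eterm_snd)

lemma Tsummand_fst: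
  assumes "i \<le> \<alpha>" "i \<le> \<beta>"
  shows "fst (Tsummand Ds a \<alpha> \<beta> i r r') z p = fcoeff a \<alpha> i r p * (if i < \<alpha> then 1 / (z - p (i, r i) - 1) else 1)
    * (Pp a i (pshift_tuple i \<alpha> r p) z / Pp a (i - 1) (pshift_tuple i \<alpha> r p) (z - 1) * (\<Prod>k<i. Zf Ds k z))
    * (ecoeff Ds a \<beta> i r' (pshift_tuple i \<alpha> r p)
       * (if i < \<beta> then 1 / (z - pshift_tuple i \<alpha> r p (i, r' i)) else 1))"
  unfolding Tsummand_def tmul3_fst using assms
  by (simp add: fterm_fst fterm_snd gterm_fst gterm_snd eterm_fst pshift_tuple_def)

definition clearing_den :: "(nat \<Rightarrow> nat) \<Rightarrow> nat \<Rightarrow> complex \<Rightarrow> pvar \<Rightarrow> complex" where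
  "clearing_den a m z p = (\<Prod>l\<in>{1..<m}. Pp a l p (z - 1))"

definition cleared_term ::
    "divisor_pts \<Rightarrow> (nat \<Rightarrow> nat) \<Rightarrow> nat \<Rightarrow> nat \<Rightarrow> nat \<Rightarrow> (nat \<Rightarrow> nat) \<Rightarrow> (nat \<Rightarrow> nat) \<Rightarrow> complex \<Rightarrow> pvar \<Rightarrow> complex" where
  "cleared_term Ds a \<alpha> \<beta> i r r' z p = fcoeff a \<alpha> i r p * ecoeff Ds a \<beta> i r' (pshift_tuple i \<alpha> r p)
     * (\<Prod>k\<in>{1..<i}. Zf Ds k z) * cleared_factor a \<alpha> \<beta> i r r' z p"

lemma Tsummand_cleared:
  assumes a0: "a 0 = 0" and i: "1 \<le> i" "i \<le> min \<alpha> \<beta>"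
    and r: "r \<in> tuples a i \<alpha>" and r': "r' \<in> tuples a i \<beta>"
    and z0: "Zf Ds 0 z \<noteq> 0" and z1: "i < \<alpha> \<Longrightarrow> z \<noteq> p (i, r i) + 1"
    and z2: "i < \<beta> \<Longrightarrow> z \<noteq> pshift_tuple i \<alpha> r p (i, r' i)" and z3: "Pp a (i - 1) p (z - 1) \<noteq> 0"
  shows "fst (Tsummand Ds a \<alpha> \<beta> i r r') z p / Zf Ds 0 z * clearing_den a (min \<alpha> \<beta>) z p
    = cleared_term Ds a \<alpha> \<beta> i r r' z p"
proof -
  define p' where "p' = pshift_tuple i \<alpha> r p"
  define M where "M = (\<Prod>l\<in>{1..<min \<alpha> \<beta>} - {i - 1}. Pp a l p (z - 1))"
  have "Pp a (i - 1) p' (z - 1) = Pp a (i - 1) p (z - 1)"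
    by (rule Pp_cong) (use i in \<open>auto simp: p'_def pshift_tuple_at\<close>)
  moreover have "(\<Prod>k<i. Zf Ds k z) = Zf Ds 0 z * (\<Prod>k\<in>{1..<i}. Zf Ds k z)"
  proof -
    have "{..<i} = insert 0 {1..<i}" using i by auto
    then show ?thesis by simp
  qed
  moreover have "clearing_den a (min \<alpha> \<beta>) z p = Pp a (i - 1) p (z - 1) * M"
  proof (cases "i = 1")
    case True
    then show ?thesis by (simp add: clearing_den_def M_def Pp_empty a0)
  next
    case False
    then have "i - 1 \<in> {1..<min \<alpha> \<beta>}" using i by auto
    then show ?thesis unfolding clearing_den_def M_def by (simp add: prod.remove)
  qed
  moreover have "(if i < \<alpha> then 1 / (z - p (i, r i) - 1) else 1) * Pp a i p' z
      * (if i < \<beta> then 1 / (z - p' (i, r' i)) else 1) * M = cleared_factor a \<alpha> \<beta> i r r' z p"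
    unfolding p'_def M_def using i tuples_mem[OF r] tuples_mem[OF r'] z1 z2
    by (intro pole_cancellation) auto
  moreover have "i \<le> \<alpha>" "i \<le> \<beta>" using i by auto
  ultimately show ?thesis
    unfolding Tsummand_fst[OF \<open>i \<le> \<alpha>\<close> \<open>i \<le> \<beta>\<close>] p'_def[symmetric] cleared_term_def
    using z0 z3 by (simp add: field_simps)
qed

definition cleared_sum :: "divisor_pts \<Rightarrow> (nat \<Rightarrow> nat) \<Rightarrow> nat \<Rightarrow> nat \<Rightarrow> shift \<Rightarrow> complex \<Rightarrow> pvar \<Rightarrow> complex" where
  "cleared_sum Ds a \<alpha> \<beta> k z p = (\<Sum>i\<in>{1..min \<alpha> \<beta>}. \<Sum>r\<in>tuples a i \<alpha>. \<Sum>r'\<in>tuples a i \<beta>.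
      if snd (Tsummand Ds a \<alpha> \<beta> i r r') = k then cleared_term Ds a \<alpha> \<beta> i r r' z p else 0)"

section \<open>The cleared sum is a polynomial in z\<close>

text \<open>Only Z_0 may have poles, and a_0 = a_n = 0 means that every coordinate p(l, u) occurring in
  the Lax matrix is one of the generators.\<close>

context
  fixes n :: nat and a :: "nat \<Rightarrow> nat" and Ds :: divisor_pts
  assumes a0: "a 0 = 0" and an: "a n = 0" and pts: "\<forall>(i, g, x) \<in> set Ds. i \<noteq> 0 \<longrightarrow> g = 1"
begin

lemma polyfun_coord: "l \<le> n \<Longrightarrow> u \<in> {1..a l} \<Longrightarrow> (\<lambda>p. p (l, u)) \<in> polyfun n a"
  using a0 an by (cases "l = 0 \<or> l = n") (auto intro: polyfun.var)

lemma polyfun_Pp: "l \<le> n \<Longrightarrow> X \<in> polyfun n a \<Longrightarrow> (\<lambda>p. Pp a l p (X p)) \<in> polyfun n a"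
  unfolding Pp_def by (intro polyfun_prod polyfun_diff polyfun_coord) auto

lemma polyfun_Ppr: "l \<le> n \<Longrightarrow> X \<in> polyfun n a \<Longrightarrow> (\<lambda>p. Ppr a l r p (X p)) \<in> polyfun n a"
  unfolding Ppr_def by (intro polyfun_prod polyfun_diff polyfun_coord) auto

lemma Zf_pos_level: "1 \<le> k \<Longrightarrow> Zf Ds k x = prod_list (map (\<lambda>(i, g, y). if i = k then x - y else 1) Ds)"
  unfolding Zf_def using pts by (intro arg_cong[where f = prod_list] map_cong) auto

lemma polyfun_Zf:
  assumes "1 \<le> k" "X \<in> polyfun n a"
  shows "(\<lambda>p. Zf Ds k (X p)) \<in> polyfun n a"
proof -
  have "(\<lambda>p. prod_list (map (\<lambda>e. (\<lambda>(i, g, y) p. if i = k then X p - y else 1) e p) Ds)) \<in> polyfun n a"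
    using assms(2) by (intro polyfun_prod_list) (auto split: prod.split intro!: polyfun_If polyfun_diff polyfun.const)
  moreover have "Zf Ds k (X p) = prod_list (map (\<lambda>e. (\<lambda>(i, g, y) p. if i = k then X p - y else 1) e p) Ds)" for p
    unfolding Zf_pos_level[OF assms(1)] by (intro arg_cong[where f = prod_list] map_cong) auto
  ultimately show ?thesis by simp
qed

lemma locring_poly_Zf:
  assumes "1 \<le> k"
  shows "locring_poly n a (\<lambda>z p. Zf Ds k z)"
proof -
  have "locring_poly n a (\<lambda>z p. prod_list (map (\<lambda>e. (\<lambda>(i, g, y) z p. if i = k then z - y else 1) e z p) Ds))"
    by (intro locring_poly_prod_list)
      (auto split: prod.split intro!: locring_poly_If locring_poly_linear polyfun.const
        locring_poly_const locring_const)
  moreover have "Zf Ds k z = prod_list (map (\<lambda>e. (\<lambda>(i, g, y) z p. if i = k then z - y else 1) e z p) Ds)" for z p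
    unfolding Zf_pos_level[OF assms] by (intro arg_cong[where f = prod_list] map_cong) auto
  ultimately show ?thesis by (rule locring_poly_cong)
qed

lemma locring_inverse_Ppr:
  assumes "1 \<le> k" "k < n" "r \<in> {1..a k}"
  shows "(\<lambda>p. 1 / Ppr a k r p (p (k, r))) \<in> locring n a"
proof -
  have "(\<lambda>p. \<Prod>u\<in>{1..a k} - {r}. 1 / (p (k, r) - p (k, u) + of_int 0)) \<in> locring n a"
    using assms by (intro locring_prod locring_inverse_den) (auto simp: valid_den_def)
  then show ?thesis unfolding Ppr_def by (simp add: prod_dividef)
qed

lemma locring_inverse_prod_Ppr:
  assumes "1 \<le> i" "j \<le> n" "r \<in> tuples a i j"
  shows "(\<lambda>p. 1 / (\<Prod>k\<in>{i..<j}. Ppr a k (r k) p (p (k, r k)))) \<in> locring n a"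
proof -
  have "(\<lambda>p. \<Prod>k\<in>{i..<j}. 1 / Ppr a k (r k) p (p (k, r k))) \<in> locring n a"
    using assms tuples_mem[OF assms(3)] by (intro locring_prod locring_inverse_Ppr) auto
  then show ?thesis by (simp add: prod_dividef)
qed

lemma locring_fcoeff:
  assumes "1 \<le> i" "\<alpha> \<le> n" "r \<in> tuples a i \<alpha>"
  shows "(\<lambda>p. fcoeff a \<alpha> i r p) \<in> locring n a"
proof (cases "i < \<alpha>")
  case True
  have "r (k - 1) \<in> {1..a (k - 1)}" if "k \<in> {i + 1..<\<alpha>}" for k
  proof -
    have "k - 1 \<in> {i..<\<alpha>}" using that by auto
    then show ?thesis by (rule tuples_mem[OF assms(3)])
  qed
  then have "(\<lambda>p. Pp a \<alpha> p (p (\<alpha> - 1, r (\<alpha> - 1)) + 1)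
      * (\<Prod>k\<in>{i + 1..<\<alpha>}. Ppr a k (r k) p (p (k - 1, r (k - 1)) + 1))) \<in> locring n a"
    using True assms tuples_mem[OF assms(3)]
    by (intro locring_polyfun polyfun.mult polyfun_Pp polyfun_prod polyfun_Ppr polyfun.add
        polyfun_coord polyfun.const) auto
  then show ?thesis
    using True locring_divide[OF _ locring_inverse_prod_Ppr[OF assms]] by (simp add: fcoeff_def)
qed (simp add: fcoeff_def locring_const)

lemma locring_ecoeff:
  assumes "1 \<le> i" "\<beta> \<le> n" "r \<in> tuples a i \<beta>"
  shows "(\<lambda>p. ecoeff Ds a \<beta> i r p) \<in> locring n a"
proof (cases "i < \<beta>")
  case True
  have num: "(\<lambda>p. - (Pp a (i - 1) p (p (i, r i) - 1)
      * (\<Prod>k\<in>{i..<\<beta> - 1}. Ppr a k (r k) p (p (k + 1, r (k + 1)) - 1)))) \<in> locring n a"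
    using True assms tuples_mem[OF assms(3)]
    by (intro locring_polyfun polyfun_uminus polyfun.mult polyfun_Pp polyfun_prod polyfun_Ppr
        polyfun_diff polyfun_coord polyfun.const) auto
  have Z: "(\<lambda>p. \<Prod>k\<in>{i..<\<beta>}. Zf Ds k (p (k, r k))) \<in> locring n a"
    using assms tuples_mem[OF assms(3)] by (intro locring_polyfun polyfun_prod polyfun_Zf polyfun_coord) auto
  show ?thesis
    using True locring_mult[OF locring_divide[OF num locring_inverse_prod_Ppr[OF assms]] Z]
    by (simp add: ecoeff_def)
qed (simp add: ecoeff_def locring_const)

lemma locring_poly_Pp: "l \<le> n \<Longrightarrow> locring_poly n a (\<lambda>z p. Pp a l p (z - c))"
  unfolding Pp_def diff_diff_eq
  by (intro locring_poly_prod locring_poly_linear polyfun.add polyfun_coord polyfun.const) auto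

lemma locring_poly_Ppr: "l \<le> n \<Longrightarrow> locring_poly n a (\<lambda>z p. Ppr a l r p (z - c))"
  unfolding Ppr_def diff_diff_eq
  by (intro locring_poly_prod locring_poly_linear polyfun.add polyfun_coord polyfun.const) auto

lemma locring_poly_cleared_factor:
  assumes "i \<le> n" "min \<alpha> \<beta> \<le> n"
  shows "locring_poly n a (\<lambda>z p. cleared_factor a \<alpha> \<beta> i r r' z p)"
  unfolding cleared_factor_def using assms
  by (intro locring_poly_mult locring_poly_prod locring_poly_linear polyfun_coord locring_poly_Pp)
    (auto simp: cleared_roots_def cleared_levels_def
      intro!: locring_poly_If locring_poly_Ppr locring_poly_const[OF locring_const])

lemma locring_poly_cleared_term:
  assumes "1 \<le> i" "i \<le> min \<alpha> \<beta>" "\<alpha> \<le> n" "\<beta> \<le> n" "r \<in> tuples a i \<alpha>" "r' \<in> tuples a i \<beta>"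
  shows "locring_poly n a (\<lambda>z p. cleared_term Ds a \<alpha> \<beta> i r r' z p)"
proof -
  have "(\<lambda>p. fcoeff a \<alpha> i r p * ecoeff Ds a \<beta> i r' (pshift_tuple i \<alpha> r p)) \<in> locring n a"
    unfolding pshift_tuple_def using assms
    by (intro locring_mult locring_fcoeff locring_pshift[where c = "\<lambda>p. ecoeff Ds a \<beta> i r' p"]
        locring_ecoeff) auto
  moreover have "locring_poly n a (\<lambda>z p. \<Prod>k\<in>{1..<i}. Zf Ds k z)"
    by (intro locring_poly_prod locring_poly_Zf) auto
  moreover have "locring_poly n a (\<lambda>z p. cleared_factor a \<alpha> \<beta> i r r' z p)"
    using assms by (intro locring_poly_cleared_factor) auto
  ultimately show ?thesis
    unfolding cleared_term_def by (intro locring_poly_mult locring_poly_const)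
qed

lemma locring_poly_cleared_sum:
  "\<alpha> \<le> n \<Longrightarrow> \<beta> \<le> n \<Longrightarrow> locring_poly n a (\<lambda>z p. cleared_sum Ds a \<alpha> \<beta> k z p)"
  unfolding cleared_sum_def
  by (intro locring_poly_sum finite_tuples finite_atLeastAtMost)
    (auto intro!: locring_poly_If locring_poly_cleared_term locring_poly_const[OF locring_const])

end

section \<open>The cleared sum vanishes at the roots of the common denominator\<close>

lemma cleared_factor_root:
  assumes j: "1 \<le> j" "j < min \<alpha> \<beta>" and s: "s \<in> {1..a j}" and i: "1 \<le> i"
    and c: "(i \<noteq> j \<and> i \<noteq> Suc j) \<or> (i = j \<and> \<not> (r j = s \<and> r' j = s))"
  shows "cleared_factor a \<alpha> \<beta> i r r' (p (j, s) + 1) p = 0"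
proof (cases "j \<in> cleared_levels \<alpha> \<beta> i r r'")
  case True
  have "Pp a j p (p (j, s) + 1 - 1) = 0" using Pp_remove[of s a j p, OF s] by simp
  then have "(\<Prod>l\<in>cleared_levels \<alpha> \<beta> i r r'. Pp a l p (p (j, s) + 1 - 1)) = 0"
    using True by (intro prod_zero) (auto simp: cleared_levels_def)
  then show ?thesis unfolding cleared_factor_def by simp
next
  case False
  then have "i = j" "diag_index \<alpha> \<beta> i r r'"
    using c j unfolding cleared_levels_def by (auto split: if_splits)
  moreover have "Ppr a j (r j) p (p (j, s)) = 0"
    using calculation c s Ppr_remove[of s a j "r j" p] by (auto simp: diag_index_def)
  ultimately show ?thesis unfolding cleared_factor_def by simp
qed

definition fcoeff_step :: "(nat \<Rightarrow> nat) \<Rightarrow> nat \<Rightarrow> nat \<Rightarrow> (nat \<Rightarrow> nat) \<Rightarrow> pvar \<Rightarrow> complex \<Rightarrow> complex" where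
  "fcoeff_step a \<alpha> j \<rho> p w = (if Suc j < \<alpha> then Ppr a (Suc j) (\<rho> (Suc j)) p w else Pp a \<alpha> p w)"

lemma fcoeff_upd:
  assumes j: "j < \<alpha>"
  shows "fcoeff a \<alpha> j (\<rho>(j := s)) p
    = fcoeff a \<alpha> (Suc j) \<rho> p * fcoeff_step a \<alpha> j \<rho> p (p (j, s) + 1) / Ppr a j s p (p (j, s))"
proof -
  define r where "r = \<rho>(j := s)"
  have den: "(\<Prod>k\<in>{j..<\<alpha>}. Ppr a k (r k) p (p (k, r k)))
      = Ppr a j s p (p (j, s)) * (\<Prod>k\<in>{Suc j..<\<alpha>}. Ppr a k (\<rho> k) p (p (k, \<rho> k)))"
    using j by (simp add: prod.atLeast_Suc_lessThan r_def)
  show ?thesis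
  proof (cases "Suc j < \<alpha>")
    case True
    have "(\<Prod>k\<in>{Suc j..<\<alpha>}. Ppr a k (r k) p (p (k - 1, r (k - 1)) + 1))
        = Ppr a (Suc j) (\<rho> (Suc j)) p (p (j, s) + 1)
          * (\<Prod>k\<in>{Suc (Suc j)..<\<alpha>}. Ppr a k (\<rho> k) p (p (k - 1, \<rho> (k - 1)) + 1))"
      using True by (subst prod.atLeast_Suc_lessThan) (auto simp: r_def intro!: prod.cong)
    moreover have "r (\<alpha> - 1) = \<rho> (\<alpha> - 1)" using True by (auto simp: r_def)
    ultimately show ?thesis
      using True j unfolding fcoeff_def fcoeff_step_def r_def[symmetric] den by (simp add: ac_simps)
  next
    case False
    then have "\<alpha> = Suc j" using j by simp
    then show ?thesis unfolding fcoeff_def fcoeff_step_def r_def[symmetric] den by (simp add: r_def)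
  qed
qed

lemma pshift_tuple_upd:
  "j < \<alpha> \<Longrightarrow> pshift_tuple j \<alpha> (\<rho>(j := s)) p (l, u)
    = (if l = j then p (j, u) + (if u = s then 1 else 0) else pshift_tuple (Suc j) \<alpha> \<rho> p (l, u))"
  by (auto simp: pshift_tuple_at)

lemma pshift_tuple_below: "l \<le> j \<Longrightarrow> pshift_tuple (Suc j) \<alpha> \<rho> p (l, u) = p (l, u)"
  by (auto simp: pshift_tuple_at)

lemma ecoeff_upd:
  fixes \<rho> \<rho>' :: "nat \<Rightarrow> nat" and p :: pvar
  assumes j: "j < \<alpha>" "Suc j < \<beta>" "1 \<le> j"
  defines "v \<equiv> pshift_tuple (Suc j) \<alpha> \<rho> p (Suc j, \<rho>' (Suc j))"
  shows "\<exists>E. ecoeff Ds a \<beta> j (\<rho>'(j := s)) (pshift_tuple j \<alpha> (\<rho>(j := s)) p)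
        = E * Pp a (j - 1) p (p (j, s)) * Ppr a j s p (v - 1) * Zf Ds j (p (j, s) + 1)
          / Ppr a j s p (p (j, s) + 1)
      \<and> ecoeff Ds a \<beta> (Suc j) \<rho>' (pshift_tuple (Suc j) \<alpha> \<rho> p) = E * Pp a j p (v - 1)"
proof -
  define p1 where "p1 = pshift_tuple j \<alpha> (\<rho>(j := s)) p"
  define p2 where "p2 = pshift_tuple (Suc j) \<alpha> \<rho> p"
  define r' where "r' = \<rho>'(j := s)"
  have p1: "p1 (l, u) = (if l = j then p (j, u) + (if u = s then 1 else 0) else p2 (l, u))" for l u
    unfolding p1_def p2_def using j(1) by (rule pshift_tuple_upd)
  define En where "En = (\<Prod>k\<in>{Suc j..<\<beta> - 1}. Ppr a k (\<rho>' k) p2 (p2 (k + 1, \<rho>' (k + 1)) - 1))"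
  define Ed where "Ed = (\<Prod>k\<in>{Suc j..<\<beta>}. Ppr a k (\<rho>' k) p2 (p2 (k, \<rho>' k)))"
  define EZ where "EZ = (\<Prod>k\<in>{Suc j..<\<beta>}. Zf Ds k (p2 (k, \<rho>' k)))"
  have N: "(\<Prod>k\<in>{j..<\<beta> - 1}. Ppr a k (r' k) p1 (p1 (k + 1, r' (k + 1)) - 1)) = Ppr a j s p (v - 1) * En"
    unfolding En_def v_def p2_def[symmetric] using j
    by (subst prod.atLeast_Suc_lessThan)
      (auto simp: r'_def p1 intro!: prod.cong Ppr_cong arg_cong2[where f = "(*)"])
  have D: "(\<Prod>k\<in>{j..<\<beta>}. Ppr a k (r' k) p1 (p1 (k, r' k))) = Ppr a j s p (p (j, s) + 1) * Ed"
    unfolding Ed_def using j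
    by (subst prod.atLeast_Suc_lessThan)
      (auto simp: r'_def p1 intro!: prod.cong Ppr_cong arg_cong2[where f = "(*)"])
  have Z: "(\<Prod>k\<in>{j..<\<beta>}. Zf Ds k (p1 (k, r' k))) = Zf Ds j (p (j, s) + 1) * EZ"
    unfolding EZ_def using j
    by (subst prod.atLeast_Suc_lessThan) (auto simp: r'_def p1 intro!: prod.cong)
  have P: "Pp a (j - 1) p1 (p1 (j, r' j) - 1) = Pp a (j - 1) p (p (j, s))"
    using j by (auto simp: r'_def p1 p2_def pshift_tuple_below intro!: Pp_cong)
  have "ecoeff Ds a \<beta> j r' p1 = - (Pp a (j - 1) p (p (j, s)) * (Ppr a j s p (v - 1) * En))
      / (Ppr a j s p (p (j, s) + 1) * Ed) * (Zf Ds j (p (j, s) + 1) * EZ)"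
    unfolding ecoeff_def using j by (simp only: N D Z P if_True) simp
  moreover have "ecoeff Ds a \<beta> (Suc j) \<rho>' p2 = - (Pp a j p (v - 1) * En) / Ed * EZ"
  proof -
    have "Pp a j p2 (v - 1) = Pp a j p (v - 1)"
      unfolding p2_def by (rule Pp_cong) (simp add: pshift_tuple_below)
    then show ?thesis
      unfolding ecoeff_def En_def Ed_def EZ_def v_def p2_def[symmetric] using j by simp
  qed
  ultimately show ?thesis
    unfolding p1_def p2_def r'_def by (intro exI[of _ "- En / Ed * EZ"]) (simp add: field_simps)
qed

lemma ecoeff_upd_last:
  assumes "j < \<alpha>" "1 \<le> j"
  shows "ecoeff Ds a (Suc j) j (\<rho>'(j := s)) (pshift_tuple j \<alpha> (\<rho>(j := s)) p)
    = - Pp a (j - 1) p (p (j, s)) / Ppr a j s p (p (j, s) + 1) * Zf Ds j (p (j, s) + 1)"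
proof -
  have "Ppr a j s (pshift_tuple j \<alpha> (\<rho>(j := s)) p) (p (j, s) + 1) = Ppr a j s p (p (j, s) + 1)"
    using assms(1) by (intro Ppr_cong) (simp add: pshift_tuple_upd)
  moreover have "Pp a (j - 1) (pshift_tuple j \<alpha> (\<rho>(j := s)) p) (p (j, s)) = Pp a (j - 1) p (p (j, s))"
    using assms by (intro Pp_cong) (auto simp: pshift_tuple_at)
  ultimately show ?thesis
    using assms by (simp add: ecoeff_def pshift_tuple_upd)
qed

lemma cleared_term_lower_at_root:
  assumes g: "generic n a p" and j: "1 \<le> j" "Suc j \<le> min \<alpha> \<beta>" "j < n" and s: "s \<in> {1..a j}"
  defines "w \<equiv> p (j, s) + 1"
  shows "cleared_term Ds a \<alpha> \<beta> j (\<rho>(j := s)) (\<rho>'(j := s)) w p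
    = fcoeff a \<alpha> (Suc j) \<rho> p * fcoeff_step a \<alpha> j \<rho> p w
      * ecoeff Ds a \<beta> j (\<rho>'(j := s)) (pshift_tuple j \<alpha> (\<rho>(j := s)) p)
      * (\<Prod>k\<in>{1..<j}. Zf Ds k w) * Ppr a j s p w * (\<Prod>l\<in>{1..<min \<alpha> \<beta>} - {j - 1} - {j}. Pp a l p (w - 1))"
proof -
  have diag: "diag_index \<alpha> \<beta> j (\<rho>(j := s)) (\<rho>'(j := s))" using j by (simp add: diag_index_def)
  have "cleared_factor a \<alpha> \<beta> j (\<rho>(j := s)) (\<rho>'(j := s)) w p
      = Ppr a j s p w * (\<Prod>l\<in>{1..<min \<alpha> \<beta>} - {j - 1} - {j}. Pp a l p (w - 1)) * Ppr a j s p (p (j, s))"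
    using diag j by (simp add: cleared_factor_def cleared_roots_def cleared_levels_def Ppr_def w_def)
  moreover have "Ppr a j s p (p (j, s)) \<noteq> 0"
    using Ppr_shifted_nonzero[OF g j(1) j(3) s, of 0] by simp
  moreover have "fcoeff a \<alpha> j (\<rho>(j := s)) p
      = fcoeff a \<alpha> (Suc j) \<rho> p * fcoeff_step a \<alpha> j \<rho> p w / Ppr a j s p (p (j, s))"
    using fcoeff_upd[of j \<alpha>] j by (simp add: w_def)
  ultimately show ?thesis unfolding cleared_term_def by simp
qed

lemma cleared_term_upper_at_root:
  fixes p :: pvar and s :: nat and \<rho> \<rho>' :: "nat \<Rightarrow> nat"
  assumes a0: "a 0 = 0" and j: "1 \<le> j" "Suc j \<le> min \<alpha> \<beta>"
  defines "w \<equiv> p (j, s) + 1" and "D \<equiv> diag_index \<alpha> \<beta> (Suc j) \<rho> \<rho>'"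
  shows "cleared_term Ds a \<alpha> \<beta> (Suc j) \<rho> \<rho>' w p
    = fcoeff a \<alpha> (Suc j) \<rho> p * ecoeff Ds a \<beta> (Suc j) \<rho>' (pshift_tuple (Suc j) \<alpha> \<rho> p)
      * (\<Prod>k\<in>{1..<j}. Zf Ds k w) * Zf Ds j w
      * (\<Prod>u\<in>cleared_roots a \<alpha> \<beta> (Suc j) \<rho> \<rho>'. w - p (Suc j, u)) * Pp a (j - 1) p (p (j, s))
      * (\<Prod>l\<in>{1..<min \<alpha> \<beta>} - {j - 1} - {j} - (if D then {Suc j} else {}). Pp a l p (w - 1))
      * (if D then Ppr a (Suc j) (\<rho> (Suc j)) p (w - 1) else 1)"
proof -
  define L where "L = {1..<min \<alpha> \<beta>} - {j} - (if D then {Suc j} else {})"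
  have "(\<Prod>l\<in>L. Pp a l p (w - 1)) = Pp a (j - 1) p (p (j, s)) * (\<Prod>l\<in>L - {j - 1}. Pp a l p (w - 1))"
  proof (cases "j = 1")
    case True
    then show ?thesis by (simp add: Pp_empty a0 L_def)
  next
    case False
    then have "j - 1 \<in> L" using j by (auto simp: L_def)
    then show ?thesis by (simp add: prod.remove L_def w_def)
  qed
  moreover have "L - {j - 1} = {1..<min \<alpha> \<beta>} - {j - 1} - {j} - (if D then {Suc j} else {})"
    by (auto simp: L_def)
  moreover have "(\<Prod>k\<in>{1..<Suc j}. Zf Ds k w) = (\<Prod>k\<in>{1..<j}. Zf Ds k w) * Zf Ds j w"
    using j by (simp add: prod.atLeastLessThan_Suc)
  ultimately show ?thesis
    by (simp add: cleared_term_def cleared_factor_def cleared_levels_def L_def D_def ac_simps)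
qed

lemma fcoeff_step_pairing:
  fixes p :: pvar and s :: nat and \<rho> \<rho>' :: "nat \<Rightarrow> nat"
  assumes j: "Suc j < \<beta>" "Suc j \<le> \<alpha>" and \<rho>: "\<rho> \<in> tuples a (Suc j) \<alpha>" and \<rho>': "\<rho>' \<in> tuples a (Suc j) \<beta>"
  defines "w \<equiv> p (j, s) + 1" and "v \<equiv> pshift_tuple (Suc j) \<alpha> \<rho> p (Suc j, \<rho>' (Suc j))"
    and "D \<equiv> diag_index \<alpha> \<beta> (Suc j) \<rho> \<rho>'"
  shows "fcoeff_step a \<alpha> j \<rho> p w * (\<Prod>l\<in>{1..<min \<alpha> \<beta>} - {j - 1} - {j}. Pp a l p (w - 1))
    + (v - w) * (\<Prod>u\<in>cleared_roots a \<alpha> \<beta> (Suc j) \<rho> \<rho>'. w - p (Suc j, u))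
      * (\<Prod>l\<in>{1..<min \<alpha> \<beta>} - {j - 1} - {j} - (if D then {Suc j} else {}). Pp a l p (w - 1))
      * (if D then Ppr a (Suc j) (\<rho> (Suc j)) p (w - 1) else 1) = 0"
proof (cases D)
  case True
  then have c: "Suc j < \<alpha>" "\<rho>' (Suc j) = \<rho> (Suc j)" by (auto simp: D_def diag_index_def)
  have \<rho>1: "\<rho> (Suc j) \<in> {1..a (Suc j)}" using tuples_mem[OF \<rho>] c by simp
  have "Suc j \<in> {1..<min \<alpha> \<beta>} - {j - 1} - {j}" using c j by auto
  then have K: "(\<Prod>l\<in>{1..<min \<alpha> \<beta>} - {j - 1} - {j}. Pp a l p (w - 1))
      = Pp a (Suc j) p (w - 1) * (\<Prod>l\<in>{1..<min \<alpha> \<beta>} - {j - 1} - {j} - {Suc j}. Pp a l p (w - 1))"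
    by (intro prod.remove) auto
  have P: "Pp a (Suc j) p (w - 1) = (w - v) * Ppr a (Suc j) (\<rho> (Suc j)) p (w - 1)"
    using Pp_remove[of "\<rho> (Suc j)" a "Suc j" p "w - 1", OF \<rho>1] c
    by (simp add: v_def pshift_tuple_at algebra_simps)
  have Y: "(\<Prod>u\<in>cleared_roots a \<alpha> \<beta> (Suc j) \<rho> \<rho>'. w - p (Suc j, u)) = fcoeff_step a \<alpha> j \<rho> p w"
    using c j by (simp add: cleared_roots_def fcoeff_step_def Ppr_def)
  show ?thesis unfolding K P Y using True by (simp add: algebra_simps)
next
  case False
  have \<rho>1': "\<rho>' (Suc j) \<in> {1..a (Suc j)}" using tuples_mem[OF \<rho>'] j by simp
  have v: "v = p (Suc j, \<rho>' (Suc j))" using False j by (auto simp: v_def D_def diag_index_def pshift_tuple_at)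
  have X: "fcoeff_step a \<alpha> j \<rho> p w = (w - v) * (\<Prod>u\<in>cleared_roots a \<alpha> \<beta> (Suc j) \<rho> \<rho>'. w - p (Suc j, u))"
  proof (cases "Suc j < \<alpha>")
    case True
    then have "\<rho>' (Suc j) \<noteq> \<rho> (Suc j)" using False j by (auto simp: D_def diag_index_def)
    then show ?thesis
      using True j Ppr_remove[of "\<rho>' (Suc j)" a "Suc j" "\<rho> (Suc j)" p w, OF \<rho>1']
      by (simp add: fcoeff_step_def cleared_roots_def v)
  next
    case False
    then show ?thesis
      using j Pp_remove[of "\<rho>' (Suc j)" a "Suc j" p w, OF \<rho>1'] by (simp add: fcoeff_step_def cleared_roots_def v Ppr_def)
  qed
  show ?thesis unfolding X using False by (simp add: algebra_simps)
qed

lemma fcoeff_step_last: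
  assumes "Suc j \<le> \<alpha>" "\<rho> \<in> tuples a (Suc j) \<alpha>"
  shows "fcoeff_step a \<alpha> j \<rho> p w = (\<Prod>u\<in>cleared_roots a \<alpha> (Suc j) (Suc j) \<rho> \<rho>'. w - p (Suc j, u))"
  using assms by (auto simp: fcoeff_step_def cleared_roots_def Ppr_def Pp_def)

lemma cleared_terms_cancel:
  assumes a0: "a 0 = 0" and g: "generic n a p" and j: "1 \<le> j" "Suc j \<le> min \<alpha> \<beta>" "\<alpha> \<le> n"
    and s: "s \<in> {1..a j}" and \<rho>: "\<rho> \<in> tuples a (Suc j) \<alpha>" and \<rho>': "\<rho>' \<in> tuples a (Suc j) \<beta>"
  shows "cleared_term Ds a \<alpha> \<beta> j (\<rho>(j := s)) (\<rho>'(j := s)) (p (j, s) + 1) p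
    + cleared_term Ds a \<alpha> \<beta> (Suc j) \<rho> \<rho>' (p (j, s) + 1) p = 0"
proof -
  define w where "w = p (j, s) + 1"
  define D where "D = diag_index \<alpha> \<beta> (Suc j) \<rho> \<rho>'"
  define F where "F = fcoeff a \<alpha> (Suc j) \<rho> p"
  define X where "X = fcoeff_step a \<alpha> j \<rho> p w"
  define Y where "Y = (\<Prod>u\<in>cleared_roots a \<alpha> \<beta> (Suc j) \<rho> \<rho>'. w - p (Suc j, u))"
  define Zs where "Zs = (\<Prod>k\<in>{1..<j}. Zf Ds k w)"
  define K where "K = (\<Prod>l\<in>{1..<min \<alpha> \<beta>} - {j - 1} - {j}. Pp a l p (w - 1))"
  define K' where "K' = (\<Prod>l\<in>{1..<min \<alpha> \<beta>} - {j - 1} - {j} - (if D then {Suc j} else {}). Pp a l p (w - 1))"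
  define Q where "Q = (if D then Ppr a (Suc j) (\<rho> (Suc j)) p (w - 1) else 1)"
  define Ej where "Ej = ecoeff Ds a \<beta> j (\<rho>'(j := s)) (pshift_tuple j \<alpha> (\<rho>(j := s)) p)"
  define Ej' where "Ej' = ecoeff Ds a \<beta> (Suc j) \<rho>' (pshift_tuple (Suc j) \<alpha> \<rho> p)"
  have lower: "cleared_term Ds a \<alpha> \<beta> j (\<rho>(j := s)) (\<rho>'(j := s)) w p = F * X * Ej * Zs * Ppr a j s p w * K"
    unfolding F_def X_def Ej_def Zs_def K_def w_def using j s
    by (intro cleared_term_lower_at_root[OF g]) auto
  have upper: "cleared_term Ds a \<alpha> \<beta> (Suc j) \<rho> \<rho>' w p
      = F * Ej' * Zs * Zf Ds j w * Y * Pp a (j - 1) p (p (j, s)) * K' * Q"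
    unfolding F_def Ej'_def Zs_def Y_def K'_def Q_def D_def w_def using a0 j
    by (intro cleared_term_upper_at_root) auto
  have "Ppr a j s p w \<noteq> 0" using Ppr_shifted_nonzero[OF g j(1) _ s, of 1] j by (simp add: w_def)
  show ?thesis
  proof (cases "Suc j < \<beta>")
    case True
    define v where "v = pshift_tuple (Suc j) \<alpha> \<rho> p (Suc j, \<rho>' (Suc j))"
    obtain E where E: "Ej = E * Pp a (j - 1) p (p (j, s)) * Ppr a j s p (v - 1) * Zf Ds j w / Ppr a j s p w"
      "Ej' = E * Pp a j p (v - 1)"
      using ecoeff_upd[where \<rho> = \<rho> and \<rho>' = \<rho>' and p = p and s = s and Ds = Ds and a = a and j = j
        and \<alpha> = \<alpha> and \<beta> = \<beta>] True j
      unfolding Ej_def Ej'_def v_def w_def by fastforce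
    have Pjv: "Pp a j p (v - 1) = (v - w) * Ppr a j s p (v - 1)"
      using Pp_remove[of s a j p "v - 1", OF s] by (simp add: w_def algebra_simps)
    have "X * K + (v - w) * Y * K' * Q = 0"
      unfolding X_def K_def Y_def K'_def Q_def D_def v_def w_def
      using True j \<rho> \<rho>' by (intro fcoeff_step_pairing) auto
    moreover have "cleared_term Ds a \<alpha> \<beta> j (\<rho>(j := s)) (\<rho>'(j := s)) w p + cleared_term Ds a \<alpha> \<beta> (Suc j) \<rho> \<rho>' w p
        = F * E * Pp a (j - 1) p (p (j, s)) * Ppr a j s p (v - 1) * Zf Ds j w * Zs
          * (X * K + (v - w) * Y * K' * Q)"
      unfolding lower upper E Pjv using \<open>Ppr a j s p w \<noteq> 0\<close> by (simp add: field_simps)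
    ultimately show ?thesis by (simp add: w_def)
  next
    case False
    then have "\<beta> = Suc j" using j by simp
    then have Ej: "Ej = - Pp a (j - 1) p (p (j, s)) / Ppr a j s p w * Zf Ds j w"
      and Ej': "Ej' = 1" and "\<not> D" and XY: "X = Y"
      using j ecoeff_upd_last[where \<rho> = \<rho> and \<rho>' = \<rho>' and p = p and s = s and Ds = Ds and a = a]
        fcoeff_step_last[OF _ \<rho>, where w = w and \<rho>' = \<rho>' and p = p]
      by (auto simp: Ej_def Ej'_def D_def X_def Y_def w_def ecoeff_def diag_index_def)
    then have "K' = K" "Q = 1" by (simp_all add: K_def K'_def Q_def)
    then show ?thesis
      using \<open>Ppr a j s p w \<noteq> 0\<close> unfolding lower[unfolded w_def] upper[unfolded w_def] Ej Ej' XY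
      by (simp add: w_def field_simps)
  qed
qed

lemma sum_tuples_pinned:
  fixes f :: "(nat \<Rightarrow> nat) \<Rightarrow> (nat \<Rightarrow> nat) \<Rightarrow> 'a::comm_monoid_add"
  assumes "j < \<alpha>" "j < \<beta>" "s \<in> {1..a j}" and vanish: "\<And>r r'. \<not> (r j = s \<and> r' j = s) \<Longrightarrow> f r r' = 0"
  shows "(\<Sum>r\<in>tuples a j \<alpha>. \<Sum>r'\<in>tuples a j \<beta>. f r r')
    = (\<Sum>\<rho>\<in>tuples a (Suc j) \<alpha>. \<Sum>\<rho>'\<in>tuples a (Suc j) \<beta>. f (\<rho>(j := s)) (\<rho>'(j := s)))"
proof -
  have reindex: "(\<Sum>r\<in>{r \<in> tuples a j k. r j = s}. g r) = (\<Sum>\<rho>\<in>tuples a (Suc j) k. g (\<rho>(j := s)))"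
    if "j < k" for k and g :: "(nat \<Rightarrow> nat) \<Rightarrow> 'a"
    using sum.reindex_bij_betw[OF bij_betw_tuples_upd[of j k s a, OF that assms(3)], of g] by simp
  have "(\<Sum>r\<in>tuples a j \<alpha>. \<Sum>r'\<in>tuples a j \<beta>. f r r')
      = (\<Sum>r\<in>tuples a j \<alpha>. if r j = s then \<Sum>r'\<in>tuples a j \<beta>. if r' j = s then f r r' else 0 else 0)"
    using vanish by (intro sum.cong refl) (auto intro!: sum.neutral sum.cong)
  also have "\<dots> = (\<Sum>r\<in>{r \<in> tuples a j \<alpha>. r j = s}. \<Sum>r'\<in>{r' \<in> tuples a j \<beta>. r' j = s}. f r r')"
    by (simp add: sum.inter_filter finite_tuples)
  also have "\<dots> = (\<Sum>\<rho>\<in>tuples a (Suc j) \<alpha>. \<Sum>\<rho>'\<in>tuples a (Suc j) \<beta>. f (\<rho>(j := s)) (\<rho>'(j := s)))"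
    using assms(1,2) by (simp add: reindex)
  finally show ?thesis .
qed

lemma cleared_sum_root:
  assumes a0: "a 0 = 0" and g: "generic n a p" and \<alpha>: "\<alpha> \<le> n"
    and j: "j \<in> {1..<min \<alpha> \<beta>}" and s: "s \<in> {1..a j}"
  shows "cleared_sum Ds a \<alpha> \<beta> k (p (j, s) + 1) p = 0"
proof -
  define w where "w = p (j, s) + 1"
  define t where "t = (\<lambda>i r r'. if snd (Tsummand Ds a \<alpha> \<beta> i r r') = k then cleared_term Ds a \<alpha> \<beta> i r r' w p else 0)"
  define G where "G = (\<lambda>i. \<Sum>r\<in>tuples a i \<alpha>. \<Sum>r'\<in>tuples a i \<beta>. t i r r')"
  have j1: "1 \<le> j" "j < \<alpha>" "j < \<beta>" using j by auto
  have vanish: "t i r r' = 0"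
    if "1 \<le> i" "(i \<noteq> j \<and> i \<noteq> Suc j) \<or> (i = j \<and> \<not> (r j = s \<and> r' j = s))" for i r r'
    using cleared_factor_root[of j \<alpha> \<beta> s a i r r' p] j s that
    by (simp add: t_def cleared_term_def w_def)
  have "cleared_sum Ds a \<alpha> \<beta> k w p = (\<Sum>i\<in>{1..min \<alpha> \<beta>}. G i)"
    unfolding cleared_sum_def G_def t_def ..
  also have "\<dots> = (\<Sum>i\<in>{j, Suc j}. G i)"
  proof (rule sum.mono_neutral_right)
    show "{j, Suc j} \<subseteq> {1..min \<alpha> \<beta>}" using j by auto
    show "\<forall>i\<in>{1..min \<alpha> \<beta>} - {j, Suc j}. G i = 0" unfolding G_def using vanish by auto
  qed simp
  also have "\<dots> = G j + G (Suc j)" by simp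
  also have "G j = (\<Sum>\<rho>\<in>tuples a (Suc j) \<alpha>. \<Sum>\<rho>'\<in>tuples a (Suc j) \<beta>. t j (\<rho>(j := s)) (\<rho>'(j := s)))"
    unfolding G_def using j1 s vanish[of j] by (intro sum_tuples_pinned) auto
  also have "\<dots> + G (Suc j) = 0"
  proof -
    have "t j (\<rho>(j := s)) (\<rho>'(j := s)) + t (Suc j) \<rho> \<rho>' = 0"
      if "\<rho> \<in> tuples a (Suc j) \<alpha>" "\<rho>' \<in> tuples a (Suc j) \<beta>" for \<rho> \<rho>'
    proof -
      have "snd (Tsummand Ds a \<alpha> \<beta> j (\<rho>(j := s)) (\<rho>'(j := s))) = snd (Tsummand Ds a \<alpha> \<beta> (Suc j) \<rho> \<rho>')"
        using j1 j by (auto simp: Tsummand_snd qsum_upd)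
      then show ?thesis
        using cleared_terms_cancel[OF a0 g _ _ \<alpha> s that] j by (simp add: t_def w_def)
    qed
    then show ?thesis by (simp add: G_def sum.distrib[symmetric])
  qed
  finally show ?thesis by (simp add: w_def)
qed

lemma Tcoeff_cleared:
  assumes a0: "a 0 = 0" and "\<alpha> \<le> n" "\<beta> \<le> n" and z0: "Zf Ds 0 z \<noteq> 0"
    and zb: "\<And>l u. l \<le> n \<Longrightarrow> u \<in> {1..a l} \<Longrightarrow> z \<noteq> p (l, u) \<and> z \<noteq> p (l, u) + 1"
  shows "Tcoeff Ds a \<alpha> \<beta> k z p / Zf Ds 0 z * clearing_den a (min \<alpha> \<beta>) z p = cleared_sum Ds a \<alpha> \<beta> k z p"
proof -
  have "Tcoeff Ds a \<alpha> \<beta> k z p / Zf Ds 0 z * clearing_den a (min \<alpha> \<beta>) z p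
      = (\<Sum>i\<in>{1..min \<alpha> \<beta>}. \<Sum>r\<in>tuples a i \<alpha>. \<Sum>r'\<in>tuples a i \<beta>.
          (if snd (Tsummand Ds a \<alpha> \<beta> i r r') = k then fst (Tsummand Ds a \<alpha> \<beta> i r r') z p else 0)
          / Zf Ds 0 z * clearing_den a (min \<alpha> \<beta>) z p)"
    unfolding Tcoeff_def Tsummand_def by (simp add: split_beta sum_divide_distrib sum_distrib_right)
  also have "\<dots> = cleared_sum Ds a \<alpha> \<beta> k z p"
    unfolding cleared_sum_def
  proof (intro sum.cong refl)
    fix i r r' assume i: "i \<in> {1..min \<alpha> \<beta>}" and r: "r \<in> tuples a i \<alpha>" and r': "r' \<in> tuples a i \<beta>"
    have "i \<le> n" using i assms by auto
    have "z - 1 - p (i - 1, u) \<noteq> 0" if "u \<in> {1..a (i - 1)}" for u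
      using zb[of "i - 1" u] that \<open>i \<le> n\<close> by (auto simp: diff_eq_eq)
    then have "Pp a (i - 1) p (z - 1) \<noteq> 0" unfolding Pp_def by (simp add: prod_zero_iff)
    moreover have "i < \<alpha> \<Longrightarrow> z \<noteq> p (i, r i) + 1" "i < \<beta> \<Longrightarrow> z \<noteq> pshift_tuple i \<alpha> r p (i, r' i)"
      using zb[OF \<open>i \<le> n\<close> tuples_mem[OF r]] zb[OF \<open>i \<le> n\<close> tuples_mem[OF r']] by (auto simp: pshift_tuple_at)
    ultimately show "(if snd (Tsummand Ds a \<alpha> \<beta> i r r') = k then fst (Tsummand Ds a \<alpha> \<beta> i r r') z p else 0)
        / Zf Ds 0 z * clearing_den a (min \<alpha> \<beta>) z p
      = (if snd (Tsummand Ds a \<alpha> \<beta> i r r') = k then cleared_term Ds a \<alpha> \<beta> i r r' z p else 0)"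
      using Tsummand_cleared[OF a0 _ _ r r' z0] i by simp
  qed
  finally show ?thesis .
qed

lemma clearing_den_prod_roots:
  "clearing_den a m z p = (\<Prod>(l, u)\<in>Sigma {1..<m} (\<lambda>l. {1..a l}). z - (p (l, u) + 1))"
  unfolding clearing_den_def Pp_def by (subst prod.Sigma[symmetric]) (auto simp: algebra_simps)

lemma finite_Zf_zeros: "finite {z. Zf Ds k z = 0}"
proof (rule finite_subset)
  show "{z. Zf Ds k z = 0} \<subseteq> (\<lambda>(i, g, y). y) ` set Ds"
  proof
    fix z assume "z \<in> {z. Zf Ds k z = 0}"
    then obtain i g y where "(i, g, y) \<in> set Ds" "(if i = k then (z - y) powi g else 1) = 0"
      unfolding Zf_def by (auto simp: prod_list_zero_iff)
    then show "z \<in> (\<lambda>(i, g, y). y) ` set Ds" by (auto split: if_splits intro: image_eqI[where x = "(i, g, y)"])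
  qed
qed simp

context
  fixes n :: nat and a :: "nat \<Rightarrow> nat" and Ds :: divisor_pts
  assumes a0: "a 0 = 0" and an: "a n = 0" and pts: "\<forall>(i, g, x) \<in> set Ds. i \<noteq> 0 \<longrightarrow> g = 1"
begin

lemma cleared_sum_factors:
  assumes "\<alpha> \<le> n" "\<beta> \<le> n"
  shows "\<exists>Q. locring_coeffs n a Q \<and>
    (\<forall>p z. generic n a p \<longrightarrow> cleared_sum Ds a \<alpha> \<beta> k z p = clearing_den a (min \<alpha> \<beta>) z p * poly_at Q z p)"
proof -
  obtain P where P: "locring_coeffs n a P" "\<And>p z. generic n a p \<Longrightarrow> cleared_sum Ds a \<alpha> \<beta> k z p = poly_at P z p"
    using locring_poly_cleared_sum[OF a0 an pts assms, of k] by (elim locring_polyE) blast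
  define W where "W = Sigma {1..<min \<alpha> \<beta>} (\<lambda>l. {1..a l})"
  have "W \<subseteq> {(l, u). 1 \<le> l \<and> l < n \<and> 1 \<le> u \<and> u \<le> a l}" using assms by (auto simp: W_def)
  moreover have "poly_at P (p (l, u) + 1) p = 0" if "(l, u) \<in> W" "generic n a p" for l u p
  proof -
    have "cleared_sum Ds a \<alpha> \<beta> k (p (l, u) + 1) p = 0"
      using a0 that assms by (intro cleared_sum_root) (auto simp: W_def)
    then show ?thesis using P(2)[OF that(2)] by simp
  qed
  ultimately obtain Q where "locring_coeffs n a Q"
    "\<forall>p z. generic n a p \<longrightarrow> poly_at P z p = (\<Prod>(l, u)\<in>W. z - (p (l, u) + 1)) * poly_at Q z p"
    using divide_out_roots[of W n a P] P(1) by (fastforce simp: W_def)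
  then show ?thesis using P(2) by (auto simp: clearing_den_prod_roots W_def)
qed

lemma Tcoeff_normalized_poly:
  assumes "\<alpha> \<le> n" "\<beta> \<le> n"
  shows "\<exists>Q. locring_coeffs n a Q \<and>
    (\<forall>p. generic n a p \<longrightarrow> finite {z. Tcoeff Ds a \<alpha> \<beta> k z p / Zf Ds 0 z \<noteq> poly_at Q z p})"
proof -
  obtain Q where Q: "locring_coeffs n a Q"
    and fac: "\<And>p z. generic n a p \<Longrightarrow> cleared_sum Ds a \<alpha> \<beta> k z p = clearing_den a (min \<alpha> \<beta>) z p * poly_at Q z p"
    using cleared_sum_factors[OF assms] by blast
  have "finite {z. Tcoeff Ds a \<alpha> \<beta> k z p / Zf Ds 0 z \<noteq> poly_at Q z p}" if g: "generic n a p" for p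
  proof (rule finite_subset)
    define B where "B = {z. Zf Ds 0 z = 0} \<union> (\<Union>l\<in>{..n}. \<Union>u\<in>{1..a l}. {p (l, u), p (l, u) + 1})"
    show "finite B" using finite_Zf_zeros by (auto simp: B_def)
    show "{z. Tcoeff Ds a \<alpha> \<beta> k z p / Zf Ds 0 z \<noteq> poly_at Q z p} \<subseteq> B"
    proof (rule subsetI, rule ccontr)
      fix z assume z: "z \<in> {z. Tcoeff Ds a \<alpha> \<beta> k z p / Zf Ds 0 z \<noteq> poly_at Q z p}" "z \<notin> B"
      then have "Zf Ds 0 z \<noteq> 0" and zb: "\<And>l u. l \<le> n \<Longrightarrow> u \<in> {1..a l} \<Longrightarrow> z \<noteq> p (l, u) \<and> z \<noteq> p (l, u) + 1"
        unfolding B_def by auto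
      have D: "clearing_den a (min \<alpha> \<beta>) z p \<noteq> 0"
        using zb assms by (fastforce simp: clearing_den_prod_roots prod_zero_iff)
      have "Tcoeff Ds a \<alpha> \<beta> k z p / Zf Ds 0 z * clearing_den a (min \<alpha> \<beta>) z p
          = cleared_sum Ds a \<alpha> \<beta> k z p"
        using a0 assms \<open>Zf Ds 0 z \<noteq> 0\<close> zb by (rule Tcoeff_cleared)
      also have "\<dots> = poly_at Q z p * clearing_den a (min \<alpha> \<beta>) z p" by (simp add: fac[OF g])
      finally have "Tcoeff Ds a \<alpha> \<beta> k z p / Zf Ds 0 z = poly_at Q z p"
        by (rule mult_right_cancel[OF D, THEN iffD1])
      with z(1) show False by simp
    qed
  qed
  then show ?thesis using Q by blast
qed

end

theorem theorem2p22:
  fixes n :: nat and Ds :: divisor_pts and \<mu> :: "nat \<Rightarrow> int" and a :: "nat \<Rightarrow> nat"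
  assumes n2: "n \<ge> 2"
    and pts: "\<forall>(i, g, x) \<in> set Ds. i \<le> n - 1 \<and> (g = 1 \<or> g = -1) \<and> (i \<noteq> 0 \<longrightarrow> g = 1)"
    and dom: "\<forall>i\<in>{1..<n}. \<mu> (Suc i) \<le> \<mu> i"
    and a0: "a 0 = 0" and an: "a n = 0"
    and integral: "\<forall>j\<in>{1..n}. lam Ds j + \<mu> j = int (a j) - int (a (j - 1))"
  shows "\<forall>\<alpha>\<in>{1..n}. \<forall>\<beta>\<in>{1..n}. \<forall>k :: shift. \<exists>cs. set cs \<subseteq> locring n a \<and>
           (\<forall>p. generic n a p \<longrightarrow>
              finite {z. Tcoeff Ds a \<alpha> \<beta> k z p / Zf Ds 0 z \<noteq> (\<Sum>d<length cs. (cs ! d) p * z ^ d)})"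
proof (intro ballI allI)
  fix \<alpha> \<beta> k assume "\<alpha> \<in> {1..n}" "\<beta> \<in> {1..n}"
  moreover have "\<forall>(i, g, x) \<in> set Ds. i \<noteq> 0 \<longrightarrow> g = 1" using pts by auto
  ultimately obtain Q where Q: "locring_coeffs n a Q"
    and T: "\<And>p. generic n a p \<Longrightarrow> finite {z. Tcoeff Ds a \<alpha> \<beta> k z p / Zf Ds 0 z \<noteq> poly_at Q z p}"
    using Tcoeff_normalized_poly[OF a0 an, of Ds \<alpha> \<beta> k] by auto
  obtain cs where "set cs \<subseteq> locring n a"
    and "\<And>p z. generic n a p \<Longrightarrow> poly_at Q z p = (\<Sum>d<length cs. (cs ! d) p * z ^ d)"
    using locring_poly_coeff_list[OF locring_polyI[OF Q]] by blast
  then show "\<exists>cs. set cs \<subseteq> locring n a \<and> (\<forall>p. generic n a p \<longrightarrow>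
      finite {z. Tcoeff Ds a \<alpha> \<beta> k z p / Zf Ds 0 z \<noteq> (\<Sum>d<length cs. (cs ! d) p * z ^ d)})"
    using T by auto
qed

end
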